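(* Let $X=(X,d,\mu)$ be a class A space and let $\xi$ be a filter on $X$ finer than the Fréchet filter. For $T\in\mathscr{E}(X)$ the following are equivalent: (i) $T\in\mathscr{J}_{\mathrm{co}(\xi)}(X)$; (ii) $\lim_{x\to\xi}\|T\mathbf{1}_{B_x(r)}\|=0$ for all $r>0$; (iii) $\lim_{x\to\xi}\|\mathbf{1}_{B_x(r)}T\|=0$ for all $r>0$.
   Context: Let $(X,d)$ be a non-compact proper metric space (closed balls $B_x(r)=\{y:d(x,y)\le r\}$ compact) and $\mu$ a Radon measure on $X$ with support $X$, with $\mu(B_x(r))>0$ and $\sup_x\mu(B_x(r))<\infty$ for all $r>0$. $L^2(X)=L^2(X,\mu)$; $\mathbf{1}_A$ is multiplication by the characteristic function of a measurable $A$. A kernel $k$ on $X\times X$ is controlled if $k(x,y)=0$ whenever $d(x,y)>r$ for some $r$. $\mathscr{E}(X)$ is the norm closure of the operators $(Op(k)f)(x)=\int k(x,y)f(y)d\mu(y)$ with $k$ bounded, uniformly continuous and controlled. Property A: for every $\varepsilon,r>0$ there is a Borel map $\phi:X\to L^2(X)$ with $\|\phi(x)\|=1$, $\mathrm{supp}\,\phi(x)\subset B_x(s)$ for some $s$ independent of $x$, and $\|\phi(x)-\phi(y)\|<\varepsilon$ if $d(x,y)<r$. A class A space is such an $(X,d,\mu)$ which moreover satisfies $\inf_x\mu(B_x(1/2))>0$ and has Property A. Filters: the Fréchet filter consists of the sets with relatively compact complement. $\lim_{x\to\xi}f(x)=0$ means $\{x:|f(x)|<\varepsilon\}\in\xi$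 for each $\varepsilon>0$. For $F\subset X$, $F^{(r)}=\{x:\inf_{y\notin F}d(x,y)>r\}$; $\mathrm{co}(\xi)=\{F\subset X:F^{(r)}\in\xi\ \forall r>0\}$ (the largest filter $\eta\subset\xi$ such that $F\in\eta\Rightarrow F^{(r)}\in\eta$ for all $r>0$). For such a filter $\eta$, $\mathscr{J}_\eta(X)=\{T\in\mathscr{E}(X):\inf_F\|\mathbf{1}_FT\|=0\}$, infimum over measurable $F\in\eta$. *)

theory Defs
  imports "HOL-Analysis.Analysis"
begin

section \<open>The Hilbert space L^2(X,mu) (complex scalars), via representatives\<close>

definition sq_int :: "'a measure \<Rightarrow> ('a \<Rightarrow> complex) \<Rightarrow> bool" where
  "sq_int M f \<longleftrightarrow> f \<in> borel_measurable M \<and> integrable M (\<lambda>x. (cmod (f x))\<^sup>2)"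

definition l2norm :: "'a measure \<Rightarrow> ('a \<Rightarrow> complex) \<Rightarrow> real" where
  "l2norm M f = sqrt (\<integral>x. (cmod (f x))\<^sup>2 \<partial>M)"

definition l2_open :: "'a measure \<Rightarrow> ('a \<Rightarrow> complex) set \<Rightarrow> bool" where
  "l2_open M U \<longleftrightarrow> (\<forall>f\<in>U. sq_int M f \<longrightarrow>
      (\<exists>e>0. \<forall>g. sq_int M g \<and> l2norm M (\<lambda>x. g x - f x) < e \<longrightarrow> g \<in> U))"

definition l2_borel_map :: "'a measure \<Rightarrow> ('b::topological_space \<Rightarrow> 'a \<Rightarrow> complex) \<Rightarrow> bool" where
  "l2_borel_map M \<phi> \<longleftrightarrow> (\<forall>x. sq_int M (\<phi> x)) \<and>
      (\<forall>U. l2_open M U \<longrightarrow> {x. \<phi> x \<in> U} \<in> sets borel)"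

type_synonym 'a op = "('a \<Rightarrow> complex) \<Rightarrow> ('a \<Rightarrow> complex)"

definition bounded_op :: "'a measure \<Rightarrow> 'a op \<Rightarrow> bool" where
  "bounded_op M T \<longleftrightarrow>
     (\<forall>f. sq_int M f \<longrightarrow> sq_int M (T f)) \<and>
     (\<forall>f g c. sq_int M f \<and> sq_int M g \<longrightarrow>
        (AE x in M. T (\<lambda>y. c * f y + g y) x = c * T f x + T g x)) \<and>
     (\<exists>C. \<forall>f. sq_int M f \<longrightarrow> l2norm M (T f) \<le> C * l2norm M f)"

definition opnorm :: "'a measure \<Rightarrow> 'a op \<Rightarrow> real" where
  "opnorm M T = Sup {l2norm M (T f) | f. sq_int M f \<and> l2norm M f \<le> 1}"

definition mult_ind :: "'a set \<Rightarrow> 'a op" where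
  "mult_ind A f = (\<lambda>x. indicator A x * f x)"

definition Op :: "'a measure \<Rightarrow> ('a \<Rightarrow> 'a \<Rightarrow> complex) \<Rightarrow> 'a op" where
  "Op M k f = (\<lambda>x. \<integral>y. k x y * f y \<partial>M)"

definition good_kernel :: "('a::metric_space \<Rightarrow> 'a \<Rightarrow> complex) \<Rightarrow> bool" where
  "good_kernel k \<longleftrightarrow>
     bounded (range (\<lambda>p. k (fst p) (snd p))) \<and>
     uniformly_continuous_on UNIV (\<lambda>p. k (fst p) (snd p)) \<and>
     (\<exists>r. \<forall>x y. dist x y > r \<longrightarrow> k x y = 0)"

text \<open>E(X): the operator-norm closure (in B(L^2)) of the Op(k), k bounded, uniformly
  continuous and controlled.\<close>
definition in_E :: "'a::metric_space measure \<Rightarrow> 'a op \<Rightarrow> bool" where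
  "in_E M T \<longleftrightarrow> bounded_op M T \<and>
     (\<forall>e>0. \<exists>k. good_kernel k \<and> opnorm M (\<lambda>f x. T f x - Op M k f x) < e)"

definition property_A :: "'a::metric_space measure \<Rightarrow> bool" where
  "property_A M \<longleftrightarrow> (\<forall>e>0. \<forall>r>0. \<exists>\<phi> :: 'a \<Rightarrow> 'a \<Rightarrow> complex.
      l2_borel_map M \<phi> \<and>
      (\<forall>x. l2norm M (\<phi> x) = 1) \<and>
      (\<exists>s. \<forall>x. AE y in M. y \<notin> cball x s \<longrightarrow> \<phi> x y = 0) \<and>
      (\<forall>x y. dist x y < r \<longrightarrow> l2norm M (\<lambda>z. \<phi> x z - \<phi> y z) < e))"

text \<open>The standing hypotheses: X (= UNIV of the type) non-compact proper metric space, M a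
  Radon (Borel, locally finite) measure with full support, positive and uniformly bounded
  measure of balls; class A adds uniformly positive measure of 1/2-balls and property A.\<close>
definition class_A :: "'a::metric_space measure \<Rightarrow> bool" where
  "class_A M \<longleftrightarrow>
     \<not> compact (UNIV :: 'a set) \<and>
     (\<forall>(x::'a) r. compact (cball x r)) \<and>
     sets M = sets borel \<and>
     (\<forall>K. compact K \<longrightarrow> emeasure M K < \<infinity>) \<and>
     (\<forall>U. open U \<and> U \<noteq> {} \<longrightarrow> emeasure M U > 0) \<and>
     (\<forall>x r. r > 0 \<longrightarrow> emeasure M (cball x r) > 0) \<and>
     (\<forall>r>0. \<exists>C::real. \<forall>x. emeasure M (cball x r) \<le> ennreal C) \<and>
     (\<exists>c>0. \<forall>x. emeasure M (cball x (1/2)) \<ge> ennreal c) \<and>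
     property_A M"

definition finer_than_frechet :: "'a::metric_space filter \<Rightarrow> bool" where
  "finer_than_frechet \<xi> \<longleftrightarrow> (\<forall>F. compact (closure (- F)) \<longrightarrow> eventually (\<lambda>x. x \<in> F) \<xi>)"

text \<open>F^(r) = {x. inf_{y not in F} d(x,y) > r}  (inf over the empty set = +infinity).\<close>
definition inner_set :: "real \<Rightarrow> 'a::metric_space set \<Rightarrow> 'a set" where
  "inner_set r F = {x. \<exists>\<delta>>r. \<forall>y. y \<notin> F \<longrightarrow> dist x y \<ge> \<delta>}"

definition co_filter :: "'a::metric_space filter \<Rightarrow> 'a set set" where
  "co_filter \<xi> = {F. \<forall>r>0. eventually (\<lambda>x. x \<in> inner_set r F) \<xi>}"

definition J_ideal :: "'a::metric_space measure \<Rightarrow> 'a set set \<Rightarrow> 'a op set" where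
  "J_ideal M \<eta> = {T. in_E M T \<and>
      (INF F \<in> {F \<in> \<eta>. F \<in> sets M}. opnorm M (\<lambda>f. mult_ind F (T f))) = 0}"

end

(* Approximate T in norm by an integral operator Op k whose kernel vanishes off the r0-neighbourhood
   of the diagonal.  Then 1_{B(x,r)} T and T 1_{B(x,r+r0)} control each other up to the
   approximation error, which gives (ii) <-> (iii).  If T is small on some F in co(xi), it is small
   on every ball B(x,r) contained in F, which eventually holds; this gives (i) -> (iii).
   Conversely, given (iii), let F be the union of the unit balls around the points x where
   1_{B(x,R)} T is small; F lies in co(xi).  Property A yields a square partition of unity
   (psi_j), with pieces of bounded diameter, that varies slowly at scale r0.  Then
     |1_F Op k f|^2 <= 2 sum_j |1_F Op k (psi_j f)|^2 + 2 sum_j |[psi_j, Op k] f|^2,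
   where each piece psi_j f is seen by Op k only near a ball on which T is small, and the
   commutators are small because psi varies slowly; so 1_F T is small, which gives (i). *)

theory Submission
  imports Defs
begin

section \<open>Square integrable functions\<close>

lemma power2_sum_le: "(a + b)\<^sup>2 \<le> 2 * a\<^sup>2 + 2 * (b::real)\<^sup>2"
  using sum_squares_bound[of a b] by (simp add: power2_sum)

lemma sq_int_borel_measurable: "sq_int M f \<Longrightarrow> f \<in> borel_measurable M"
  by (simp add: sq_int_def)

lemma sq_int_iff_nn_integral:
  "sq_int M f \<longleftrightarrow> f \<in> borel_measurable M \<and> (\<integral>\<^sup>+x. ennreal ((cmod (f x))\<^sup>2) \<partial>M) < \<infinity>"
proof (cases "f \<in> borel_measurable M")
  case True
  then have "(\<lambda>x. (cmod (f x))\<^sup>2) \<in> borel_measurable M" by measurable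
  then show ?thesis unfolding sq_int_def integrable_iff_bounded by simp
qed (simp add: sq_int_def)

lemma l2norm_nonneg [simp]: "0 \<le> l2norm M f"
  unfolding l2norm_def by simp

lemma power2_l2norm: "(l2norm M f)\<^sup>2 = (\<integral>x. (cmod (f x))\<^sup>2 \<partial>M)"
  unfolding l2norm_def by (simp add: integral_nonneg)

lemma l2norm_power2_nn_integral:
  "sq_int M f \<Longrightarrow> ennreal ((l2norm M f)\<^sup>2) = (\<integral>\<^sup>+x. ennreal ((cmod (f x))\<^sup>2) \<partial>M)"
  unfolding power2_l2norm sq_int_def by (subst nn_integral_eq_integral) auto

lemma sq_int_nn_integral_le:
  assumes "f \<in> borel_measurable M" "(\<integral>\<^sup>+x. ennreal ((cmod (f x))\<^sup>2) \<partial>M) \<le> ennreal c" "0 \<le> c"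
  shows "sq_int M f" "(l2norm M f)\<^sup>2 \<le> c"
proof -
  have "(\<integral>\<^sup>+x. ennreal ((cmod (f x))\<^sup>2) \<partial>M) < \<infinity>"
    using le_less_trans[OF assms(2) ennreal_less_top] by simp
  then show f: "sq_int M f" using assms(1) by (simp add: sq_int_iff_nn_integral)
  have "ennreal ((l2norm M f)\<^sup>2) \<le> ennreal c"
    using l2norm_power2_nn_integral[OF f] assms(2) by simp
  then show "(l2norm M f)\<^sup>2 \<le> c" using assms(3) by (simp add: ennreal_le_iff)
qed

lemma sq_int_dominated:
  assumes "sq_int M g" "f \<in> borel_measurable M" "\<And>x. cmod (f x) \<le> cmod (g x)"
  shows "sq_int M f"
proof -
  have "integrable M (\<lambda>x. (cmod (f x))\<^sup>2)"
  proof (rule Bochner_Integration.integrable_bound)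
    show "integrable M (\<lambda>x. (cmod (g x))\<^sup>2)" using assms(1) by (simp add: sq_int_def)
    show "(\<lambda>x. (cmod (f x))\<^sup>2) \<in> borel_measurable M" using assms(2) by measurable
  qed (auto intro!: power_mono assms(3))
  then show ?thesis using assms(2) by (simp add: sq_int_def)
qed

lemma l2norm_mono:
  assumes "sq_int M g" "f \<in> borel_measurable M" "\<And>x. cmod (f x) \<le> cmod (g x)"
  shows "l2norm M f \<le> l2norm M g"
proof -
  have "sq_int M f" by (rule sq_int_dominated[OF assms])
  then have "(\<integral>x. (cmod (f x))\<^sup>2 \<partial>M) \<le> (\<integral>x. (cmod (g x))\<^sup>2 \<partial>M)"
    using assms by (intro integral_mono) (auto simp: sq_int_def intro!: power_mono)
  then show ?thesis unfolding l2norm_def by simp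
qed

lemma sq_int_zero [simp]: "sq_int M (\<lambda>x. 0)"
  by (simp add: sq_int_def)

lemma l2norm_zero [simp]: "l2norm M (\<lambda>x. 0) = 0"
  by (simp add: l2norm_def)

lemma sq_int_add:
  assumes "sq_int M f" "sq_int M g"
  shows "sq_int M (\<lambda>x. f x + g x)"
proof -
  have [measurable]: "f \<in> borel_measurable M" "g \<in> borel_measurable M"
    using assms by (auto simp: sq_int_def)
  have "integrable M (\<lambda>x. (cmod (f x + g x))\<^sup>2)"
  proof (rule Bochner_Integration.integrable_bound)
    show "integrable M (\<lambda>x. 2 * (cmod (f x))\<^sup>2 + 2 * (cmod (g x))\<^sup>2)"
      using assms by (auto simp: sq_int_def)
    show "(\<lambda>x. (cmod (f x + g x))\<^sup>2) \<in> borel_measurable M" by measurable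
    show "AE x in M. norm ((cmod (f x + g x))\<^sup>2) \<le> norm (2 * (cmod (f x))\<^sup>2 + 2 * (cmod (g x))\<^sup>2)"
    proof (rule AE_I2)
      fix x
      have "(cmod (f x + g x))\<^sup>2 \<le> (cmod (f x) + cmod (g x))\<^sup>2"
        by (rule power_mono[OF norm_triangle_ineq norm_ge_zero])
      then have "(cmod (f x + g x))\<^sup>2 \<le> 2 * (cmod (f x))\<^sup>2 + 2 * (cmod (g x))\<^sup>2"
        using power2_sum_le order_trans by blast
      then show "norm ((cmod (f x + g x))\<^sup>2) \<le> norm (2 * (cmod (f x))\<^sup>2 + 2 * (cmod (g x))\<^sup>2)"
        by simp
    qed
  qed
  then show ?thesis by (simp add: sq_int_def)
qed

lemma sq_int_cmult:
  assumes "sq_int M f"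
  shows "sq_int M (\<lambda>x. c * f x)"
  using assms by (auto simp: sq_int_def norm_mult power_mult_distrib)

lemma sq_int_diff:
  assumes "sq_int M f" "sq_int M g"
  shows "sq_int M (\<lambda>x. f x - g x)"
  using sq_int_add[OF assms(1) sq_int_cmult[OF assms(2), of "-1"]] by simp

lemma sq_int_of_real_mult:
  assumes "sq_int M f" "p \<in> borel_measurable M" "\<And>y. \<bar>p y\<bar> \<le> 1"
  shows "sq_int M (\<lambda>y. complex_of_real (p y) * f y)"
proof (rule sq_int_dominated[OF assms(1)])
  have [measurable]: "f \<in> borel_measurable M" "p \<in> borel_measurable M"
    using assms(1,2) by (simp_all add: sq_int_def)
  show "(\<lambda>y. complex_of_real (p y) * f y) \<in> borel_measurable M" by measurable
  show "cmod (complex_of_real (p y) * f y) \<le> cmod (f y)" for y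
    using mult_right_mono[OF assms(3)[of y], of "cmod (f y)"] by (simp add: norm_mult)
qed

lemma l2norm_cmult: "l2norm M (\<lambda>x. c * f x) = cmod c * l2norm M f"
  unfolding l2norm_def by (simp add: norm_mult power_mult_distrib real_sqrt_mult)

lemma l2norm_uminus: "l2norm M (\<lambda>x. - f x) = l2norm M f"
  unfolding l2norm_def by simp

lemma l2norm_minus_commute: "l2norm M (\<lambda>x. f x - g x) = l2norm M (\<lambda>x. g x - f x)"
  unfolding l2norm_def by (simp add: norm_minus_commute)

lemma l2norm_AE_cong:
  assumes "f \<in> borel_measurable M" "g \<in> borel_measurable M" "AE x in M. f x = g x"
  shows "l2norm M f = l2norm M g"
proof -
  have "(\<integral>x. (cmod (f x))\<^sup>2 \<partial>M) = (\<integral>x. (cmod (g x))\<^sup>2 \<partial>M)"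
    using assms by (intro integral_cong_AE) auto
  then show ?thesis by (simp add: l2norm_def)
qed

lemma l2_Cauchy_Schwarz:
  assumes "sq_int M f" "sq_int M g"
  shows "integrable M (\<lambda>x. cmod (f x) * cmod (g x))"
    and "(\<integral>x. cmod (f x) * cmod (g x) \<partial>M) \<le> l2norm M f * l2norm M g"
proof -
  have [measurable]: "f \<in> borel_measurable M" "g \<in> borel_measurable M"
    using assms by (auto simp: sq_int_def)
  show fg: "integrable M (\<lambda>x. cmod (f x) * cmod (g x))"
  proof (rule Bochner_Integration.integrable_bound)
    show "integrable M (\<lambda>x. (cmod (f x))\<^sup>2 + (cmod (g x))\<^sup>2)"
      using assms by (auto simp: sq_int_def)
    show "AE x in M. norm (cmod (f x) * cmod (g x)) \<le> norm ((cmod (f x))\<^sup>2 + (cmod (g x))\<^sup>2)"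
    proof (rule AE_I2)
      fix x
      have "2 * (cmod (f x) * cmod (g x)) \<le> (cmod (f x))\<^sup>2 + (cmod (g x))\<^sup>2"
        using sum_squares_bound[of "cmod (f x)" "cmod (g x)"] by (simp add: mult.assoc)
      moreover have "0 \<le> cmod (f x) * cmod (g x)" by simp
      ultimately have "cmod (f x) * cmod (g x) \<le> (cmod (f x))\<^sup>2 + (cmod (g x))\<^sup>2" by linarith
      then show "norm (cmod (f x) * cmod (g x)) \<le> norm ((cmod (f x))\<^sup>2 + (cmod (g x))\<^sup>2)"
        by simp
    qed
  qed measurable
  have "ennreal (\<integral>x. cmod (f x) * cmod (g x) \<partial>M)
      = (\<integral>\<^sup>+x. ennreal (cmod (f x)) * ennreal (cmod (g x)) \<partial>M)"
    using fg by (subst nn_integral_eq_integral[symmetric]) (auto simp: ennreal_mult)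
  then have "(ennreal (\<integral>x. cmod (f x) * cmod (g x) \<partial>M))\<^sup>2
      \<le> (\<integral>\<^sup>+x. (ennreal (cmod (f x)))\<^sup>2 \<partial>M) * (\<integral>\<^sup>+x. (ennreal (cmod (g x)))\<^sup>2 \<partial>M)"
    by (simp add: Cauchy_Schwarz_nn_integral)
  also have "\<dots> = ennreal ((l2norm M f)\<^sup>2) * ennreal ((l2norm M g)\<^sup>2)"
    using l2norm_power2_nn_integral[OF assms(1)] l2norm_power2_nn_integral[OF assms(2)]
    by (simp add: ennreal_power)
  finally have "ennreal ((\<integral>x. cmod (f x) * cmod (g x) \<partial>M)\<^sup>2) \<le> ennreal ((l2norm M f * l2norm M g)\<^sup>2)"
    by (simp add: ennreal_power ennreal_mult'[symmetric] power_mult_distrib integral_nonneg)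
  then have "(\<integral>x. cmod (f x) * cmod (g x) \<partial>M)\<^sup>2 \<le> (l2norm M f * l2norm M g)\<^sup>2"
    by (subst (asm) ennreal_le_iff) auto
  then show "(\<integral>x. cmod (f x) * cmod (g x) \<partial>M) \<le> l2norm M f * l2norm M g"
    by (rule power2_le_imp_le) simp
qed

lemma l2norm_triangle:
  assumes "sq_int M f" "sq_int M g"
  shows "l2norm M (\<lambda>x. f x + g x) \<le> l2norm M f + l2norm M g"
proof -
  note cs = l2_Cauchy_Schwarz[OF assms]
  have "(\<integral>x. (cmod (f x + g x))\<^sup>2 \<partial>M)
      \<le> (\<integral>x. (cmod (f x))\<^sup>2 + 2 * (cmod (f x) * cmod (g x)) + (cmod (g x))\<^sup>2 \<partial>M)"
  proof (rule integral_mono)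
    show "integrable M (\<lambda>x. (cmod (f x + g x))\<^sup>2)"
      using sq_int_add[OF assms] by (simp add: sq_int_def)
    show "integrable M (\<lambda>x. (cmod (f x))\<^sup>2 + 2 * (cmod (f x) * cmod (g x)) + (cmod (g x))\<^sup>2)"
      using assms cs(1) by (auto simp: sq_int_def)
    fix x
    have "(cmod (f x + g x))\<^sup>2 \<le> (cmod (f x) + cmod (g x))\<^sup>2"
      by (rule power_mono[OF norm_triangle_ineq norm_ge_zero])
    then show "(cmod (f x + g x))\<^sup>2 \<le> (cmod (f x))\<^sup>2 + 2 * (cmod (f x) * cmod (g x)) + (cmod (g x))\<^sup>2"
      by (simp add: power2_sum)
  qed
  also have "\<dots> = (l2norm M f)\<^sup>2 + 2 * (\<integral>x. cmod (f x) * cmod (g x) \<partial>M) + (l2norm M g)\<^sup>2"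
    using assms cs(1) by (simp add: sq_int_def power2_l2norm)
  also have "\<dots> \<le> (l2norm M f + l2norm M g)\<^sup>2"
    using cs(2) by (simp add: power2_sum)
  finally have "(l2norm M (\<lambda>x. f x + g x))\<^sup>2 \<le> (l2norm M f + l2norm M g)\<^sup>2"
    by (simp add: power2_l2norm)
  then show ?thesis by (rule power2_le_imp_le) simp
qed

lemma l2norm_triangle_diff:
  assumes "sq_int M f" "sq_int M g"
  shows "l2norm M (\<lambda>x. f x - g x) \<le> l2norm M f + l2norm M g"
  using l2norm_triangle[OF assms(1) sq_int_cmult[OF assms(2), of "-1"]] by (simp add: l2norm_uminus)

lemma l2norm_reverse_triangle:
  assumes "sq_int M f" "sq_int M g"
  shows "\<bar>l2norm M f - l2norm M g\<bar> \<le> l2norm M (\<lambda>x. f x - g x)"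
  using l2norm_triangle[OF sq_int_diff[OF assms] assms(2)] l2norm_triangle[OF sq_int_diff[OF assms(2,1)] assms(1)]
    l2norm_minus_commute[of M f g] by simp

lemma borel_measurable_mult_ind [measurable]:
  assumes [measurable]: "A \<in> sets M" "f \<in> borel_measurable M"
  shows "mult_ind A f \<in> borel_measurable M"
  unfolding mult_ind_def by measurable

lemma cmod_mult_ind_le: "cmod (mult_ind A f x) \<le> cmod (f x)"
  unfolding mult_ind_def by (simp add: indicator_def)

lemma mult_ind_diff: "mult_ind A (\<lambda>x. f x - g x) = (\<lambda>x. mult_ind A f x - mult_ind A g x)"
  unfolding mult_ind_def by (simp add: fun_eq_iff algebra_simps)

lemma sq_int_mult_ind: "A \<in> sets M \<Longrightarrow> sq_int M f \<Longrightarrow> sq_int M (mult_ind A f)"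
  by (rule sq_int_dominated[of M f]) (auto simp: sq_int_def intro: cmod_mult_ind_le)

lemma l2norm_mult_ind_le: "A \<in> sets M \<Longrightarrow> sq_int M f \<Longrightarrow> l2norm M (mult_ind A f) \<le> l2norm M f"
  by (rule l2norm_mono) (auto simp: sq_int_def intro: cmod_mult_ind_le)

lemma l2norm_mult_ind_mono:
  assumes "A \<subseteq> B" "A \<in> sets M" "B \<in> sets M" "sq_int M f"
  shows "l2norm M (mult_ind A f) \<le> l2norm M (mult_ind B f)"
proof (rule l2norm_mono)
  show "sq_int M (mult_ind B f)" by (rule sq_int_mult_ind[OF assms(3,4)])
  show "mult_ind A f \<in> borel_measurable M"
    using assms(2) sq_int_borel_measurable[OF assms(4)] by measurable
  show "cmod (mult_ind A f x) \<le> cmod (mult_ind B f x)" for x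
    using assms(1) by (auto simp: mult_ind_def indicator_def)
qed


section \<open>Bounded operators and the operator norm\<close>

abbreviation opnorm_values :: "'a measure \<Rightarrow> 'a op \<Rightarrow> real set" where
  "opnorm_values M A \<equiv> {l2norm M (A f) | f. sq_int M f \<and> l2norm M f \<le> 1}"

text \<open>\<open>ind_op B T\<close> and \<open>op_ind T B\<close> are the products \<open>\<one>\<^sub>B T\<close> and \<open>T \<one>\<^sub>B\<close>.\<close>

abbreviation ind_op :: "'a set \<Rightarrow> 'a op \<Rightarrow> 'a op" where
  "ind_op B T \<equiv> \<lambda>f. mult_ind B (T f)"

abbreviation op_ind :: "'a op \<Rightarrow> 'a set \<Rightarrow> 'a op" where
  "op_ind T B \<equiv> \<lambda>f. T (mult_ind B f)"

lemma opnorm_least: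
  assumes "\<And>f. sq_int M f \<Longrightarrow> l2norm M f \<le> 1 \<Longrightarrow> l2norm M (A f) \<le> c"
  shows "opnorm M A \<le> c"
proof -
  have "l2norm M (A (\<lambda>x. 0)) \<in> opnorm_values M A" by force
  then show ?thesis unfolding opnorm_def using assms by (intro cSup_least) auto
qed

lemma bounded_op_sq_int: "bounded_op M T \<Longrightarrow> sq_int M f \<Longrightarrow> sq_int M (T f)"
  unfolding bounded_op_def by auto

lemma bounded_op_linear:
  "bounded_op M T \<Longrightarrow> sq_int M f \<Longrightarrow> sq_int M g \<Longrightarrow>
    AE x in M. T (\<lambda>y. c * f y + g y) x = c * T f x + T g x"
  unfolding bounded_op_def by blast

lemma bounded_op_bound:
  assumes "bounded_op M T"
  obtains C where "C \<ge> 0" "\<And>f. sq_int M f \<Longrightarrow> l2norm M (T f) \<le> C * l2norm M f"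
proof -
  obtain C where C: "\<And>f. sq_int M f \<Longrightarrow> l2norm M (T f) \<le> C * l2norm M f"
    using assms unfolding bounded_op_def by blast
  have "l2norm M (T f) \<le> max C 0 * l2norm M f" if "sq_int M f" for f
    using C[OF that] mult_right_mono[of C "max C 0" "l2norm M f"] by simp
  then show ?thesis using that[of "max C 0"] by simp
qed

lemma bounded_opI:
  assumes "\<And>f. sq_int M f \<Longrightarrow> sq_int M (T f)"
    and "\<And>f g c. sq_int M f \<Longrightarrow> sq_int M g \<Longrightarrow> AE x in M. T (\<lambda>y. c * f y + g y) x = c * T f x + T g x"
    and "\<And>f. sq_int M f \<Longrightarrow> l2norm M (T f) \<le> C * l2norm M f"
  shows "bounded_op M T"
  unfolding bounded_op_def using assms by blast

lemma bounded_op_AE_cmult: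
  assumes "bounded_op M T" "sq_int M f"
  shows "AE x in M. T (\<lambda>y. c * f y) x = c * T f x"
proof -
  have "AE x in M. T (\<lambda>y. 1 * 0 + 0) x = 1 * T (\<lambda>y. 0) x + T (\<lambda>y. 0) x"
    by (rule bounded_op_linear[OF assms(1)]) auto
  moreover have "AE x in M. T (\<lambda>y. c * f y + 0) x = c * T f x + T (\<lambda>y. 0) x"
    by (rule bounded_op_linear[OF assms]) simp
  ultimately show ?thesis by eventually_elim simp
qed

lemma bounded_op_l2norm_cmult:
  assumes "bounded_op M T" "sq_int M f"
  shows "l2norm M (T (\<lambda>y. c * f y)) = cmod c * l2norm M (T f)"
proof -
  have "l2norm M (T (\<lambda>y. c * f y)) = l2norm M (\<lambda>x. c * T f x)"
    using bounded_op_sq_int[OF assms(1) sq_int_cmult[OF assms(2)]]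
      sq_int_cmult[OF bounded_op_sq_int[OF assms]] bounded_op_AE_cmult[OF assms]
    by (intro l2norm_AE_cong) (auto simp: sq_int_def)
  then show ?thesis by (simp add: l2norm_cmult)
qed

lemma bounded_op_bdd_above: "bounded_op M T \<Longrightarrow> bdd_above (opnorm_values M T)"
proof (elim bounded_op_bound)
  fix C assume C: "C \<ge> 0" "\<And>f. sq_int M f \<Longrightarrow> l2norm M (T f) \<le> C * l2norm M f"
  have "l2norm M (T f) \<le> C" if "sq_int M f" "l2norm M f \<le> 1" for f
    using C(2)[OF that(1)] mult_left_mono[OF that(2) C(1)] by simp
  then show "bdd_above (opnorm_values M T)" by (intro bdd_aboveI[of _ C]) auto
qed

lemma l2norm_le_opnorm_unit:
  "bounded_op M T \<Longrightarrow> sq_int M f \<Longrightarrow> l2norm M f \<le> 1 \<Longrightarrow> l2norm M (T f) \<le> opnorm M T"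
  unfolding opnorm_def by (rule cSup_upper) (auto dest: bounded_op_bdd_above)

lemma opnorm_nonneg:
  assumes "bounded_op M T"
  shows "0 \<le> opnorm M T"
proof -
  have "l2norm M (T (\<lambda>x. 0)) \<le> opnorm M T"
    by (rule l2norm_le_opnorm_unit[OF assms]) simp_all
  then show ?thesis using l2norm_nonneg order_trans by blast
qed

lemma l2norm_le_opnorm:
  assumes T: "bounded_op M T" and f: "sq_int M f"
  shows "l2norm M (T f) \<le> opnorm M T * l2norm M f"
proof (cases "l2norm M f = 0")
  case True
  text \<open>Every multiple of \<open>f\<close> lies in the unit ball, so \<open>T f\<close> must have norm zero.\<close>
  show ?thesis
  proof (rule ccontr)
    assume "\<not> ?thesis"
    then have pos: "l2norm M (T f) > 0" using True by simp
    define c where "c = (opnorm M T + 1) / l2norm M (T f)"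
    have "c \<ge> 0" unfolding c_def using opnorm_nonneg[OF T] pos by simp
    have "c * l2norm M (T f) = l2norm M (T (\<lambda>y. complex_of_real c * f y))"
      using bounded_op_l2norm_cmult[OF T f] \<open>c \<ge> 0\<close> by simp
    also have "\<dots> \<le> opnorm M T"
      using True by (intro l2norm_le_opnorm_unit[OF T sq_int_cmult[OF f]]) (simp add: l2norm_cmult)
    finally show False unfolding c_def using pos by simp
  qed
next
  case False
  then have pos: "l2norm M f > 0" using l2norm_nonneg[of M f] by linarith
  define c where "c = 1 / l2norm M f"
  have "l2norm M (T f) / l2norm M f = l2norm M (T (\<lambda>y. complex_of_real c * f y))"
    unfolding bounded_op_l2norm_cmult[OF T f] c_def using pos by (simp add: norm_divide)
  also have "\<dots> \<le> opnorm M T"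
  proof (rule l2norm_le_opnorm_unit[OF T sq_int_cmult[OF f]])
    show "l2norm M (\<lambda>y. complex_of_real c * f y) \<le> 1"
      unfolding l2norm_cmult c_def using pos by (simp add: norm_divide)
  qed
  finally show ?thesis using pos by (simp add: divide_le_eq mult.commute)
qed

lemma bounded_op_ind_op:
  assumes T: "bounded_op M T" and B: "B \<in> sets M"
  shows "bounded_op M (ind_op B T)"
proof -
  obtain C where C: "\<And>f. sq_int M f \<Longrightarrow> l2norm M (T f) \<le> C * l2norm M f"
    using bounded_op_bound[OF T] by blast
  show ?thesis
  proof (rule bounded_opI)
    show "sq_int M (mult_ind B (T f))" if "sq_int M f" for f
      by (rule sq_int_mult_ind[OF B bounded_op_sq_int[OF T that]])
    show "AE x in M. mult_ind B (T (\<lambda>y. c * f y + g y)) x = c * mult_ind B (T f) x + mult_ind B (T g) x"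
      if "sq_int M f" "sq_int M g" for f g c
      using bounded_op_linear[OF T that, of c] by eventually_elim (simp add: mult_ind_def algebra_simps)
    show "l2norm M (mult_ind B (T f)) \<le> C * l2norm M f" if "sq_int M f" for f
      using l2norm_mult_ind_le[OF B bounded_op_sq_int[OF T that]] C[OF that] by linarith
  qed
qed

lemma bounded_op_op_ind:
  assumes T: "bounded_op M T" and B: "B \<in> sets M"
  shows "bounded_op M (op_ind T B)"
proof -
  obtain C where C: "C \<ge> 0" "\<And>f. sq_int M f \<Longrightarrow> l2norm M (T f) \<le> C * l2norm M f"
    using bounded_op_bound[OF T] by blast
  show ?thesis
  proof (rule bounded_opI)
    show "sq_int M (T (mult_ind B f))" if "sq_int M f" for f
      by (rule bounded_op_sq_int[OF T sq_int_mult_ind[OF B that]])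
    show "AE x in M. T (mult_ind B (\<lambda>y. c * f y + g y)) x = c * T (mult_ind B f) x + T (mult_ind B g) x"
      if "sq_int M f" "sq_int M g" for f g c
    proof -
      have "mult_ind B (\<lambda>y. c * f y + g y) = (\<lambda>y. c * mult_ind B f y + mult_ind B g y)"
        by (simp add: mult_ind_def fun_eq_iff algebra_simps)
      then show ?thesis
        using bounded_op_linear[OF T sq_int_mult_ind[OF B that(1)] sq_int_mult_ind[OF B that(2)]] by simp
    qed
    show "l2norm M (T (mult_ind B f)) \<le> C * l2norm M f" if "sq_int M f" for f
      using C(2)[OF sq_int_mult_ind[OF B that]] mult_left_mono[OF l2norm_mult_ind_le[OF B that] C(1)]
      by linarith
  qed
qed

lemma bounded_op_diff:
  assumes S: "bounded_op M S" and T: "bounded_op M T"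
  shows "bounded_op M (\<lambda>f x. S f x - T f x)"
proof -
  obtain C D where C: "\<And>f. sq_int M f \<Longrightarrow> l2norm M (S f) \<le> C * l2norm M f"
    and D: "\<And>f. sq_int M f \<Longrightarrow> l2norm M (T f) \<le> D * l2norm M f"
    using bounded_op_bound[OF S] bounded_op_bound[OF T] by metis
  show ?thesis
  proof (rule bounded_opI)
    show "sq_int M (\<lambda>x. S f x - T f x)" if "sq_int M f" for f
      by (rule sq_int_diff[OF bounded_op_sq_int[OF S that] bounded_op_sq_int[OF T that]])
    show "AE x in M. S (\<lambda>y. c * f y + g y) x - T (\<lambda>y. c * f y + g y) x
        = c * (S f x - T f x) + (S g x - T g x)" if "sq_int M f" "sq_int M g" for f g c
      using bounded_op_linear[OF S that, of c] bounded_op_linear[OF T that, of c]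
      by eventually_elim (simp add: algebra_simps)
    show "l2norm M (\<lambda>x. S f x - T f x) \<le> (C + D) * l2norm M f" if "sq_int M f" for f
      using l2norm_triangle_diff[OF bounded_op_sq_int[OF S that] bounded_op_sq_int[OF T that]]
        C[OF that] D[OF that] by (simp add: algebra_simps)
  qed
qed

lemma opnorm_ind_op_mono:
  assumes T: "bounded_op M T" and "A \<subseteq> B" "A \<in> sets M" "B \<in> sets M"
  shows "opnorm M (ind_op A T) \<le> opnorm M (ind_op B T)"
proof (rule opnorm_least)
  fix f assume f: "sq_int M f" "l2norm M f \<le> 1"
  have "l2norm M (mult_ind A (T f)) \<le> l2norm M (mult_ind B (T f))"
    using assms(2-4) bounded_op_sq_int[OF T f(1)] by (rule l2norm_mult_ind_mono)
  also have "\<dots> \<le> opnorm M (ind_op B T)"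
    by (rule l2norm_le_opnorm_unit[OF bounded_op_ind_op[OF T assms(4)] f])
  finally show "l2norm M (mult_ind A (T f)) \<le> opnorm M (ind_op B T)" .
qed


section \<open>Geometry and measure on class A spaces\<close>

lemma proper_countable_net:
  assumes proper: "\<And>(x::'a::metric_space) r. compact (cball x r)" and "\<delta> > 0"
  obtains D :: "'a::metric_space set" where "countable D" "D \<noteq> {}" "\<And>x. \<exists>d\<in>D. dist x d < \<delta>"
proof -
  fix x0 :: 'a
  have "\<exists>K. finite K \<and> K \<subseteq> cball x0 (real n) \<and> cball x0 (real n) \<subseteq> (\<Union>x\<in>K. ball x \<delta>)" for n :: nat
    using seq_compact_imp_totally_bounded[OF compact_imp_seq_compact[OF proper]] \<open>\<delta> > 0\<close> by blast
  then obtain K where K: "\<And>n. finite (K n)" "\<And>n. cball x0 (real n) \<subseteq> (\<Union>x\<in>K n. ball x \<delta>)"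
    by metis
  have "\<exists>d\<in>insert x0 (\<Union>n. K n). dist x d < \<delta>" for x
  proof -
    obtain n :: nat where "dist x0 x \<le> real n" using real_arch_simple by blast
    then obtain d where "d \<in> K n" "x \<in> ball d \<delta>" using K(2)[of n] by auto
    then show ?thesis by (auto simp: dist_commute)
  qed
  moreover have "countable (insert x0 (\<Union>n. K n))" using K(1) by (simp add: countable_finite)
  ultimately show ?thesis by (intro that[of "insert x0 (\<Union>n. K n)"]) auto
qed

lemma proper_ball_partition:
  assumes proper: "\<And>(x::'a::metric_space) r. compact (cball x r)" and "\<delta> > 0"
  obtains d :: "nat \<Rightarrow> 'a::metric_space" and Q
  where "disjoint_family Q" "\<And>y. \<exists>i. y \<in> Q i" "\<And>i. Q i \<subseteq> ball (d i) \<delta>" "\<And>i. Q i \<in> sets borel"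
proof -
  obtain D :: "'a set" where D: "countable D" "D \<noteq> {}" "\<And>x. \<exists>d\<in>D. dist x d < \<delta>"
    using proper_countable_net[OF assms] by blast
  define d where "d = from_nat_into D"
  define Q where "Q i = ball (d i) \<delta> - (\<Union>j<i. ball (d j) \<delta>)" for i
  have "disjoint_family Q"
    unfolding disjoint_family_on_def
  proof (intro ballI impI)
    fix i j :: nat assume "i \<noteq> j"
    then consider "i < j" | "j < i" by linarith
    then show "Q i \<inter> Q j = {}" unfolding Q_def by cases auto
  qed
  moreover have "\<exists>i. y \<in> Q i" for y
  proof -
    obtain e where "e \<in> D" "dist y e < \<delta>" using D(3) by blast
    moreover obtain i where "from_nat_into D i = e" using from_nat_into_surj[OF D(1) \<open>e \<in> D\<close>] ..
    ultimately have ex: "\<exists>i. y \<in> ball (d i) \<delta>" unfolding d_def by (auto simp: dist_commute)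
    define i0 where "i0 = (LEAST i. y \<in> ball (d i) \<delta>)"
    have "y \<in> ball (d i0) \<delta>" unfolding i0_def using ex by (rule LeastI_ex)
    moreover have "y \<notin> ball (d j) \<delta>" if "j < i0" for j
      using not_less_Least that unfolding i0_def by blast
    ultimately show ?thesis unfolding Q_def by (intro exI[of _ i0]) auto
  qed
  ultimately show ?thesis by (intro that[of Q d]) (auto simp: Q_def)
qed

lemma ennreal_le_suminf: "(f :: nat \<Rightarrow> ennreal) i \<le> (\<Sum>n. f n)"
  using sum_le_suminf[of f "{i}"] by simp

lemma suminf_indicator_partition:
  assumes "disjoint_family Q" "\<exists>i. y \<in> Q i"
  shows "(\<Sum>i. indicator (Q i) y :: ennreal) = 1"
  using suminf_indicator[OF assms(1), of y] assms(2) by (auto simp: indicator_def)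

lemma cmod_integral_power2_le:
  fixes h :: "'a \<Rightarrow> complex"
  assumes "integrable M h" "A \<in> sets M" "\<And>y. y \<notin> A \<Longrightarrow> h y = 0"
  shows "ennreal ((cmod (integral\<^sup>L M h))\<^sup>2) \<le> emeasure M A * (\<integral>\<^sup>+y. ennreal ((cmod (h y))\<^sup>2) \<partial>M)"
proof -
  have [measurable]: "h \<in> borel_measurable M" "A \<in> sets M" using assms(1,2) by auto
  have "ennreal (cmod (integral\<^sup>L M h)) \<le> (\<integral>\<^sup>+y. ennreal (cmod (h y)) \<partial>M)"
    by (rule integral_norm_bound_ennreal[OF assms(1)])
  also have "\<dots> = (\<integral>\<^sup>+y. indicator A y * ennreal (cmod (h y)) \<partial>M)"
    by (rule nn_integral_cong) (auto simp: indicator_def assms(3))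
  finally have "(ennreal (cmod (integral\<^sup>L M h)))\<^sup>2 \<le> (\<integral>\<^sup>+y. indicator A y * ennreal (cmod (h y)) \<partial>M)\<^sup>2"
    by (rule power_mono) simp
  then have "ennreal ((cmod (integral\<^sup>L M h))\<^sup>2) \<le> (\<integral>\<^sup>+y. indicator A y * ennreal (cmod (h y)) \<partial>M)\<^sup>2"
    by (simp add: ennreal_power)
  also have "\<dots> \<le> (\<integral>\<^sup>+y. (indicator A y)\<^sup>2 \<partial>M) * (\<integral>\<^sup>+y. (ennreal (cmod (h y)))\<^sup>2 \<partial>M)"
    by (rule Cauchy_Schwarz_nn_integral) auto
  also have "(\<integral>\<^sup>+y. ((indicator A y)::ennreal)\<^sup>2 \<partial>M) = emeasure M A"
    by (subst nn_integral_cong[where v = "indicator A"]) (auto simp: indicator_def)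
  finally show ?thesis by (simp add: ennreal_power)
qed

text \<open>The part of the class A hypotheses that the proof uses.\<close>
locale property_A_space =
  fixes M :: "'a::metric_space measure"
  assumes sets_eq_borel: "sets M = sets borel"
    and compact_cball: "compact (cball (x::'a) r)"
    and emeasure_compact_finite: "compact K \<Longrightarrow> emeasure M K < \<infinity>"
    and cball_bounded_measure: "r > 0 \<Longrightarrow> \<exists>C. \<forall>x. emeasure M (cball x r) \<le> ennreal C"
    and property_A: "property_A M"

lemma class_A_imp_property_A_space: "class_A M \<Longrightarrow> property_A_space M"
  unfolding class_A_def by unfold_locales auto

context property_A_space
begin

lemma space_eq_UNIV [simp]: "space M = UNIV"
  using sets_eq_imp_space_eq[OF sets_eq_borel] by simp

lemma borel_sets [intro]: "A \<in> sets borel \<Longrightarrow> A \<in> sets M"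
  using sets_eq_borel by simp

lemma cball_sets [simp, measurable]: "cball x r \<in> sets M"
  by auto

lemma emeasure_cball_finite: "emeasure M (cball x r) < \<infinity>"
  by (rule emeasure_compact_finite[OF compact_cball])

lemma uniform_cball_bound: "\<exists>C\<ge>0. \<forall>x. emeasure M (cball x r) \<le> ennreal C"
proof -
  obtain C where C: "\<And>x. emeasure M (cball x (max r 1)) \<le> ennreal C"
    using cball_bounded_measure[of "max r 1"] by force
  have "emeasure M (cball x r) \<le> ennreal (max C 0)" for x
  proof -
    have "emeasure M (cball x r) \<le> emeasure M (cball x (max r 1))" by (rule emeasure_mono) auto
    also have "\<dots> \<le> ennreal (max C 0)" using C[of x] by (auto intro: order_trans ennreal_leI)
    finally show ?thesis .
  qed
  then show ?thesis by (intro exI[of _ "max C 0"]) auto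
qed

lemma continuous_borel_measurable: "continuous_on UNIV f \<Longrightarrow> f \<in> borel_measurable M"
  unfolding measurable_cong_sets[OF sets_eq_borel refl] by (rule borel_measurable_continuous_onI)

lemma ball_partition:
  "\<exists>(d :: nat \<Rightarrow> 'a) Q. disjoint_family Q \<and> (\<forall>y. \<exists>i. y \<in> Q i) \<and>
    (\<forall>i. Q i \<subseteq> ball (d i) (1/2)) \<and> (\<forall>i. Q i \<in> sets M)"
proof -
  obtain d :: "nat \<Rightarrow> 'a" and Q
    where "disjoint_family Q" "\<And>y. \<exists>i. y \<in> Q i" "\<And>i. Q i \<subseteq> ball (d i) (1/2)" "\<And>i. Q i \<in> sets borel"
    by (rule proper_ball_partition[OF compact_cball, of "1/2"]) auto
  then show ?thesis using borel_sets by blast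
qed

text \<open>Averaging over balls is bounded on nonnegative functions: cover by the pieces of a partition
  into sets of diameter at most one and use the uniform bound on the measure of \<open>(R+1)\<close>-balls.\<close>
lemma nn_integral_cball_average_le:
  obtains C where "C \<ge> 0" "\<And>(g::'a \<Rightarrow> ennreal) (h::'a \<Rightarrow> ennreal) (a::ennreal). g \<in> borel_measurable M \<Longrightarrow>
      (\<And>x. h x \<le> a * (\<integral>\<^sup>+y. indicator (cball x R) y * g y \<partial>M)) \<Longrightarrow>
      (\<integral>\<^sup>+x. h x \<partial>M) \<le> a * ennreal C * (\<integral>\<^sup>+y. g y \<partial>M)"
proof -
  obtain d :: "nat \<Rightarrow> 'a" and Q
    where Q: "disjoint_family Q" "\<And>y. \<exists>i. y \<in> Q i" "\<And>i. Q i \<subseteq> ball (d i) (1/2)" "\<And>i. Q i \<in> sets M"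
    using ball_partition by blast
  note [measurable] = Q(4)
  obtain C where C: "C \<ge> 0" "\<And>x. emeasure M (cball x (R + 1)) \<le> ennreal C"
    using uniform_cball_bound[of "R + 1"] by blast
  have "(\<integral>\<^sup>+x. h x \<partial>M) \<le> a * ennreal C * (\<integral>\<^sup>+y. g y \<partial>M)"
    if [measurable]: "g \<in> borel_measurable M" and h: "\<And>x. h x \<le> a * (\<integral>\<^sup>+y. indicator (cball x R) y * g y \<partial>M)"
    for g h :: "'a \<Rightarrow> ennreal" and a
  proof -
    have pointwise: "indicator (cball x R) y * g y
        \<le> (\<Sum>i. indicator (cball (d i) (R + 1)) x * (indicator (Q i) y * g y))" for x y
    proof -
      obtain i where i: "y \<in> Q i" using Q(2) by blast
      have "indicator (cball x R) y * g y \<le> indicator (cball (d i) (R + 1)) x * (indicator (Q i) y * g y)"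
      proof (cases "y \<in> cball x R")
        case True
        have "dist (d i) y < 1/2" using Q(3)[of i] i by auto
        then have "x \<in> cball (d i) (R + 1)"
          using True dist_triangle[of "d i" x y] by (auto simp: dist_commute)
        then show ?thesis using True i by simp
      qed simp
      also have "\<dots> \<le> (\<Sum>i. indicator (cball (d i) (R + 1)) x * (indicator (Q i) y * g y))"
        by (rule ennreal_le_suminf)
      finally show ?thesis .
    qed
    have "(\<integral>\<^sup>+x. h x \<partial>M)
        \<le> (\<integral>\<^sup>+x. a * (\<integral>\<^sup>+y. (\<Sum>i. indicator (cball (d i) (R + 1)) x * (indicator (Q i) y * g y)) \<partial>M) \<partial>M)"
    proof (rule nn_integral_mono)
      fix x
      have "h x \<le> a * (\<integral>\<^sup>+y. indicator (cball x R) y * g y \<partial>M)" by (rule h)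
      also have "\<dots> \<le> a * (\<integral>\<^sup>+y. (\<Sum>i. indicator (cball (d i) (R + 1)) x * (indicator (Q i) y * g y)) \<partial>M)"
        by (intro mult_left_mono nn_integral_mono pointwise) simp
      finally show "h x \<le> \<dots>" .
    qed
    also have "\<dots> = (\<Sum>i. a * (emeasure M (cball (d i) (R + 1)) * (\<integral>\<^sup>+y. indicator (Q i) y * g y \<partial>M)))"
      by (simp add: nn_integral_suminf nn_integral_cmult nn_integral_multc mult.assoc flip: ennreal_suminf_cmult)
    also have "\<dots> \<le> (\<Sum>i. a * (ennreal C * (\<integral>\<^sup>+y. indicator (Q i) y * g y \<partial>M)))"
      by (intro suminf_le summableI mult_left_mono mult_right_mono C(2)) auto
    also have "\<dots> = a * ennreal C * (\<Sum>i. \<integral>\<^sup>+y. indicator (Q i) y * g y \<partial>M)"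
      by (simp add: mult.assoc)
    also have "(\<Sum>i. \<integral>\<^sup>+y. indicator (Q i) y * g y \<partial>M) = (\<integral>\<^sup>+y. (\<Sum>i. indicator (Q i) y * g y) \<partial>M)"
      by (subst nn_integral_suminf) auto
    also have "\<dots> = (\<integral>\<^sup>+y. g y \<partial>M)"
      by (simp add: ennreal_suminf_multc suminf_indicator_partition[OF Q(1,2)])
    finally show ?thesis .
  qed
  then show ?thesis using that C(1) by blast
qed

lemma integrable_bounded_cball_mult:
  fixes g f :: "'a \<Rightarrow> complex"
  assumes f: "sq_int M f" and g: "g \<in> borel_measurable M" "\<And>y. cmod (g y) \<le> B"
    and supp: "\<And>y. y \<notin> cball x R \<Longrightarrow> g y = 0"
  shows "integrable M (\<lambda>y. g y * f y)"
proof (rule Bochner_Integration.integrable_bound)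
  have "B \<ge> 0" using g(2)[of x] norm_ge_zero[of "g x"] by linarith
  show "integrable M (\<lambda>y. B * (indicator (cball x R) y + (cmod (f y))\<^sup>2))"
    using f emeasure_cball_finite[of x R] by (intro integrable_mult_right integrable_add) (auto simp: sq_int_def)
  show "(\<lambda>y. g y * f y) \<in> borel_measurable M"
    using g(1) sq_int_borel_measurable[OF f] by measurable
  show "AE y in M. norm (g y * f y) \<le> norm (B * (indicator (cball x R) y + (cmod (f y))\<^sup>2))"
  proof (rule AE_I2)
    fix y
    have "2 * cmod (f y) \<le> 1 + (cmod (f y))\<^sup>2"
      using sum_squares_bound[of 1 "cmod (f y)"] by simp
    then have "cmod (f y) \<le> 1 + (cmod (f y))\<^sup>2"
      using norm_ge_zero[of "f y"] by linarith
    then have "cmod (g y) * cmod (f y) \<le> B * (indicator (cball x R) y + (cmod (f y))\<^sup>2)"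
      using supp[of y] \<open>B \<ge> 0\<close> mult_mono[OF g(2)[of y] \<open>cmod (f y) \<le> 1 + _\<close>]
      by (cases "y \<in> cball x R") auto
    then show "norm (g y * f y) \<le> norm (B * (indicator (cball x R) y + (cmod (f y))\<^sup>2))"
      using \<open>B \<ge> 0\<close> by (simp add: norm_mult)
  qed
qed

end


section \<open>Integral operators with controlled kernels\<close>

locale controlled_kernel = property_A_space M for M :: "'a::metric_space measure" +
  fixes k :: "'a \<Rightarrow> 'a \<Rightarrow> complex" and K r0 :: real
  assumes kernel_bound: "cmod (k x y) \<le> K"
    and propagation_pos: "r0 > 0"
    and kernel_vanishes: "dist x y > r0 \<Longrightarrow> k x y = 0"
    and kernel_uniformly_continuous: "uniformly_continuous_on UNIV (\<lambda>p. k (fst p) (snd p))"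
begin

lemma kernel_bound_nonneg: "K \<ge> 0"
  using kernel_bound[of undefined undefined] norm_ge_zero order_trans by blast

lemma kernel_vanishes_outside: "y \<notin> cball x r0 \<Longrightarrow> k x y = 0"
  by (simp add: kernel_vanishes)

lemma kernel_equicontinuous:
  assumes "e > 0"
  obtains d where "d > 0" "\<And>x x' y. dist x' x < d \<Longrightarrow> cmod (k x' y - k x y) < e"
    "\<And>x y y'. dist y' y < d \<Longrightarrow> cmod (k x y' - k x y) < e"
proof -
  obtain d where "d > 0" and d: "\<And>p p'. dist p' p < d \<Longrightarrow> dist (k (fst p') (snd p')) (k (fst p) (snd p)) < e"
    using kernel_uniformly_continuous assms unfolding uniformly_continuous_on_def by blast
  show ?thesis
  proof (rule that[OF \<open>d > 0\<close>])
    show "cmod (k x' y - k x y) < e" if "dist x' x < d" for x x' y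
      using d[of "(x', y)" "(x, y)"] that by (simp add: dist_Pair_Pair dist_norm)
    show "cmod (k x y' - k x y) < e" if "dist y' y < d" for x y y'
      using d[of "(x, y')" "(x, y)"] that by (simp add: dist_Pair_Pair dist_norm)
  qed
qed

lemma kernel_borel_measurable [measurable]: "(\<lambda>y. k x y) \<in> borel_measurable M"
proof (rule continuous_borel_measurable)
  show "continuous_on UNIV (\<lambda>y. k x y)"
    unfolding continuous_on_iff
  proof (intro ballI allI impI)
    fix y and e :: real assume "e > 0"
    then obtain d where "d > 0" "\<And>y'. dist y' y < d \<Longrightarrow> cmod (k x y' - k x y) < e"
      by (rule kernel_equicontinuous) blast
    then show "\<exists>d>0. \<forall>y'\<in>UNIV. dist y' y < d \<longrightarrow> dist (k x y') (k x y) < e"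
      by (auto simp: dist_norm)
  qed
qed

lemma integrable_kernel_mult: "sq_int M f \<Longrightarrow> integrable M (\<lambda>y. k x y * f y)"
  by (rule integrable_bounded_cball_mult[OF _ kernel_borel_measurable kernel_bound kernel_vanishes_outside])

lemma Op_linear: "sq_int M f \<Longrightarrow> sq_int M g \<Longrightarrow> Op M k (\<lambda>y. c * f y + g y) x = c * Op M k f x + Op M k g x"
  unfolding Op_def using integrable_kernel_mult[of f x] integrable_kernel_mult[of g x]
  by (simp add: algebra_simps)

lemma cmod_Op_diff_le:
  assumes f: "sq_int M f" and "dist x' x < 1" and e: "\<And>y. cmod (k x' y - k x y) \<le> e"
  shows "cmod (Op M k f x' - Op M k f x) \<le> e * (\<integral>y. indicator (cball x (r0 + 1)) y * cmod (f y) \<partial>M)"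
proof -
  have "integrable M (\<lambda>y. complex_of_real (indicator (cball x (r0 + 1)) y) * f y)"
  proof (rule integrable_bounded_cball_mult[OF f, of _ 1 x "r0 + 1"])
    show "(\<lambda>y. complex_of_real (indicator (cball x (r0 + 1)) y)) \<in> borel_measurable M" by measurable
  qed (auto simp: indicator_def)
  from integrable_norm[OF this]
  have int: "integrable M (\<lambda>y. indicator (cball x (r0 + 1)) y * cmod (f y))"
    by (simp add: norm_mult)
  have "cmod (Op M k f x' - Op M k f x) = cmod (\<integral>y. k x' y * f y - k x y * f y \<partial>M)"
    unfolding Op_def using integrable_kernel_mult[OF f] by simp
  also have "\<dots> \<le> (\<integral>y. cmod (k x' y * f y - k x y * f y) \<partial>M)"
    by (rule integral_norm_bound)
  also have "\<dots> \<le> (\<integral>y. e * (indicator (cball x (r0 + 1)) y * cmod (f y)) \<partial>M)"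
  proof (rule integral_mono)
    show "integrable M (\<lambda>y. cmod (k x' y * f y - k x y * f y))"
      using integrable_kernel_mult[OF f] by auto
    show "integrable M (\<lambda>y. e * (indicator (cball x (r0 + 1)) y * cmod (f y)))"
      using int by auto
    fix y
    show "cmod (k x' y * f y - k x y * f y) \<le> e * (indicator (cball x (r0 + 1)) y * cmod (f y))"
    proof (cases "y \<in> cball x (r0 + 1)")
      case True
      have "cmod (k x' y * f y - k x y * f y) = cmod (k x' y - k x y) * cmod (f y)"
        by (simp add: left_diff_distrib[symmetric] norm_mult)
      also have "\<dots> \<le> e * cmod (f y)" by (intro mult_right_mono e) simp
      finally show ?thesis using True by simp
    next
      case False
      then have "dist x' y > r0" "dist x y > r0"
        using dist_triangle3[of x y x'] \<open>dist x' x < 1\<close> by auto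
      then show ?thesis using False by (simp add: kernel_vanishes)
    qed
  qed
  finally show ?thesis by simp
qed

lemma continuous_on_Op:
  assumes f: "sq_int M f"
  shows "continuous_on UNIV (Op M k f)"
  unfolding continuous_on_iff
proof (intro ballI allI impI)
  fix x :: 'a and e :: real assume "e > 0"
  define L where "L = (\<integral>y. indicator (cball x (r0 + 1)) y * cmod (f y) \<partial>M)"
  have "L \<ge> 0" unfolding L_def by (rule Bochner_Integration.integral_nonneg) simp
  define e' where "e' = e / (L + 1)"
  have "e' > 0" unfolding e'_def using \<open>e > 0\<close> \<open>L \<ge> 0\<close> by simp
  then obtain d where "d > 0" and d: "\<And>x x' y. dist x' x < d \<Longrightarrow> cmod (k x' y - k x y) < e'"
    by (rule kernel_equicontinuous) blast
  have "dist (Op M k f x') (Op M k f x) < e" if "dist x' x < min d 1" for x'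
  proof -
    have "dist (Op M k f x') (Op M k f x) \<le> e' * L"
      unfolding dist_norm L_def using that d[of x' x]
      by (intro cmod_Op_diff_le[OF f]) (auto intro: less_imp_le)
    also have "\<dots> < e' * (L + 1)" using \<open>e' > 0\<close> by simp
    also have "\<dots> = e" unfolding e'_def using \<open>L \<ge> 0\<close> by simp
    finally show ?thesis .
  qed
  then show "\<exists>\<delta>>0. \<forall>x'\<in>UNIV. dist x' x < \<delta> \<longrightarrow> dist (Op M k f x') (Op M k f x) < e"
    using \<open>d > 0\<close> by (intro exI[of _ "min d 1"]) auto
qed

lemma borel_measurable_Op [measurable]: "sq_int M f \<Longrightarrow> Op M k f \<in> borel_measurable M"
  by (rule continuous_borel_measurable[OF continuous_on_Op])

lemma cmod_Op_power2_le:
  assumes f: "sq_int M f" and C: "\<And>x. emeasure M (cball x r0) \<le> ennreal C"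
  shows "ennreal ((cmod (Op M k f x))\<^sup>2)
    \<le> ennreal C * ennreal (K\<^sup>2) * (\<integral>\<^sup>+y. indicator (cball x r0) y * ennreal ((cmod (f y))\<^sup>2) \<partial>M)"
proof -
  have [measurable]: "f \<in> borel_measurable M" by (rule sq_int_borel_measurable[OF f])
  have "ennreal ((cmod (Op M k f x))\<^sup>2)
      \<le> emeasure M (cball x r0) * (\<integral>\<^sup>+y. ennreal ((cmod (k x y * f y))\<^sup>2) \<partial>M)"
    unfolding Op_def
    by (rule cmod_integral_power2_le[OF integrable_kernel_mult[OF f] cball_sets]) (simp add: kernel_vanishes_outside)
  also have "\<dots> \<le> ennreal C * (\<integral>\<^sup>+y. ennreal (K\<^sup>2) * (indicator (cball x r0) y * ennreal ((cmod (f y))\<^sup>2)) \<partial>M)"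
  proof (intro mult_mono C nn_integral_mono)
    fix y
    show "ennreal ((cmod (k x y * f y))\<^sup>2) \<le> ennreal (K\<^sup>2) * (indicator (cball x r0) y * ennreal ((cmod (f y))\<^sup>2))"
    proof (cases "y \<in> cball x r0")
      case True
      have "(cmod (k x y * f y))\<^sup>2 \<le> K\<^sup>2 * (cmod (f y))\<^sup>2"
        unfolding norm_mult power_mult_distrib by (intro mult_right_mono power_mono kernel_bound) auto
      then show ?thesis using True by (simp add: ennreal_mult'[symmetric] ennreal_leI)
    qed (simp add: kernel_vanishes_outside)
  qed auto
  also have "\<dots> = ennreal C * ennreal (K\<^sup>2) * (\<integral>\<^sup>+y. indicator (cball x r0) y * ennreal ((cmod (f y))\<^sup>2) \<partial>M)"
    by (subst nn_integral_cmult) (auto simp: mult.assoc)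
  finally show ?thesis .
qed

lemma bounded_op_Op: "bounded_op M (Op M k)"
proof -
  obtain C1 where C1: "C1 \<ge> 0" "\<And>x. emeasure M (cball x r0) \<le> ennreal C1"
    using uniform_cball_bound by blast
  obtain C2 where C2: "C2 \<ge> 0" "\<And>(g::'a \<Rightarrow> ennreal) (h::'a \<Rightarrow> ennreal) a. g \<in> borel_measurable M \<Longrightarrow>
      (\<And>x. h x \<le> a * (\<integral>\<^sup>+y. indicator (cball x r0) y * g y \<partial>M)) \<Longrightarrow>
      (\<integral>\<^sup>+x. h x \<partial>M) \<le> a * ennreal C2 * (\<integral>\<^sup>+y. g y \<partial>M)"
    using nn_integral_cball_average_le[where R = r0] by blast
  define c where "c = C1 * K\<^sup>2 * C2"
  have c: "0 \<le> c * (l2norm M f)\<^sup>2" for f unfolding c_def using C1(1) C2(1) by simp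
  have bound: "sq_int M (Op M k f) \<and> (l2norm M (Op M k f))\<^sup>2 \<le> c * (l2norm M f)\<^sup>2" if f: "sq_int M f" for f
  proof -
    have [measurable]: "f \<in> borel_measurable M" by (rule sq_int_borel_measurable[OF f])
    have "(\<integral>\<^sup>+x. ennreal ((cmod (Op M k f x))\<^sup>2) \<partial>M)
        \<le> ennreal C1 * ennreal (K\<^sup>2) * ennreal C2 * (\<integral>\<^sup>+y. ennreal ((cmod (f y))\<^sup>2) \<partial>M)"
      by (rule C2(2)) (auto intro: cmod_Op_power2_le[OF f C1(2)])
    also have "\<dots> = ennreal (c * (l2norm M f)\<^sup>2)"
      using l2norm_power2_nn_integral[OF f] C1(1) C2(1) by (simp add: c_def ennreal_mult)
    finally show ?thesis using sq_int_nn_integral_le[OF borel_measurable_Op[OF f] _ c] by blast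
  qed
  show ?thesis
  proof (rule bounded_opI)
    show "sq_int M (Op M k f)" if "sq_int M f" for f using bound[OF that] by blast
    show "AE x in M. Op M k (\<lambda>y. c * f y + g y) x = c * Op M k f x + Op M k g x"
      if "sq_int M f" "sq_int M g" for f g c
      using Op_linear[OF that] by simp
    show "l2norm M (Op M k f) \<le> sqrt c * l2norm M f" if "sq_int M f" for f
      using real_sqrt_le_mono[OF conjunct2[OF bound[OF that]]] c[of f] by (simp add: real_sqrt_mult)
  qed
qed

lemma sq_int_Op: "sq_int M f \<Longrightarrow> sq_int M (Op M k f)"
  by (rule bounded_op_sq_int[OF bounded_op_Op])

lemma Op_vanishes_outside:
  assumes "\<And>y. y \<notin> cball z r \<Longrightarrow> g y = 0" "x \<notin> cball z (r + r0)"
  shows "Op M k g x = 0"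
proof -
  have vanish: "k x y * g y = 0" for y
  proof (cases "y \<in> cball z r")
    case True
    then have "dist x y > r0" using assms(2) dist_triangle[of z x y] by (simp add: dist_commute)
    then show ?thesis by (simp add: kernel_vanishes)
  qed (simp add: assms(1))
  show ?thesis unfolding Op_def by (simp only: vanish Bochner_Integration.integral_zero)
qed

lemma Op_local:
  assumes "x \<in> cball z r"
  shows "Op M k f x = Op M k (mult_ind (cball z (r + r0)) f) x"
proof -
  have localize: "k x y * f y = k x y * (indicator (cball z (r + r0)) y * f y)" for y
  proof (cases "dist x y \<le> r0")
    case True
    then have "y \<in> cball z (r + r0)" using assms dist_triangle[of z y x] by simp
    then show ?thesis by simp
  qed (simp add: kernel_vanishes)
  show ?thesis unfolding Op_def mult_ind_def by (simp only: localize)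
qed

end

lemma (in property_A_space) good_kernel_controlled:
  assumes "good_kernel k"
  obtains K r0 where "controlled_kernel M k K r0"
proof -
  obtain K where "\<forall>z\<in>range (\<lambda>p. k (fst p) (snd p)). norm z \<le> K"
    using assms unfolding good_kernel_def bounded_iff by blast
  then have bound: "cmod (k x y) \<le> K" for x y by (metis UNIV_I fst_conv image_eqI snd_conv)
  obtain r where "\<And>x y. dist x y > r \<Longrightarrow> k x y = 0" using assms unfolding good_kernel_def by blast
  then have "controlled_kernel M k K (max r 1)"
    using assms bound unfolding good_kernel_def by unfold_locales auto
  then show ?thesis by (rule that)
qed


section \<open>Square partitions of unity from Property A\<close>

lemma mult_ind_eq_of_real_mult: "mult_ind A f = (\<lambda>y. complex_of_real (indicator A y) * f y)"
  by (simp add: mult_ind_def indicator_def fun_eq_iff)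

lemma suminf_l2norm_power2_partition:
  fixes \<psi> :: "nat \<Rightarrow> 'a \<Rightarrow> real"
  assumes \<psi>: "\<And>j. \<psi> j \<in> borel_measurable M" "\<And>j y. \<bar>\<psi> j y\<bar> \<le> 1"
    and unit: "\<And>y. (\<Sum>j. ennreal ((\<psi> j y)\<^sup>2)) = 1" and g: "sq_int M g"
  shows "(\<Sum>j. ennreal ((l2norm M (\<lambda>y. complex_of_real (\<psi> j y) * g y))\<^sup>2)) = ennreal ((l2norm M g)\<^sup>2)"
proof -
  have [measurable]: "g \<in> borel_measurable M" "\<And>j. \<psi> j \<in> borel_measurable M"
    using g \<psi>(1) by (auto simp: sq_int_def)
  have "(\<Sum>j. ennreal ((l2norm M (\<lambda>y. complex_of_real (\<psi> j y) * g y))\<^sup>2))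
      = (\<Sum>j. \<integral>\<^sup>+z. ennreal ((\<psi> j z)\<^sup>2) * ennreal ((cmod (g z))\<^sup>2) \<partial>M)"
    by (subst l2norm_power2_nn_integral[OF sq_int_of_real_mult[OF g \<psi>]])
      (simp add: norm_mult power_mult_distrib ennreal_mult')
  also have "\<dots> = (\<integral>\<^sup>+z. (\<Sum>j. ennreal ((\<psi> j z)\<^sup>2) * ennreal ((cmod (g z))\<^sup>2)) \<partial>M)"
    by (subst nn_integral_suminf) auto
  also have "\<dots> = ennreal ((l2norm M g)\<^sup>2)"
    by (simp add: ennreal_suminf_multc unit l2norm_power2_nn_integral[OF g])
  finally show ?thesis .
qed

lemma suminf_l2norm_power2_mult_ind:
  assumes Q: "disjoint_family Q" "\<And>y. \<exists>i. y \<in> Q i" "\<And>i. Q i \<in> sets M" and g: "sq_int M g"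
  shows "(\<Sum>j. ennreal ((l2norm M (mult_ind (Q j) g))\<^sup>2)) = ennreal ((l2norm M g)\<^sup>2)"
proof -
  have "ennreal ((indicator (Q j) y)\<^sup>2) = indicator (Q j) y" for j y
    by (simp add: indicator_def)
  then have "(\<Sum>j. ennreal ((indicator (Q j) y)\<^sup>2)) = 1" for y
    using suminf_indicator_partition[OF Q(1,2)] by simp
  then show ?thesis unfolding mult_ind_eq_of_real_mult
    using Q(3) by (intro suminf_l2norm_power2_partition[OF _ _ _ g]) (auto simp: indicator_def)
qed

lemma suminf_l2norm_mult_ind_diff_le:
  assumes Q: "disjoint_family Q" "\<And>y. \<exists>i. y \<in> Q i" "\<And>i. Q i \<in> sets M" and fg: "sq_int M f" "sq_int M g"
  shows "(\<Sum>j. ennreal ((l2norm M (mult_ind (Q j) f) - l2norm M (mult_ind (Q j) g))\<^sup>2))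
    \<le> ennreal ((l2norm M (\<lambda>z. f z - g z))\<^sup>2)"
proof -
  have "(l2norm M (mult_ind (Q j) f) - l2norm M (mult_ind (Q j) g))\<^sup>2 \<le> (l2norm M (mult_ind (Q j) (\<lambda>z. f z - g z)))\<^sup>2" for j
  proof -
    have "\<bar>l2norm M (mult_ind (Q j) f) - l2norm M (mult_ind (Q j) g)\<bar> \<le> l2norm M (mult_ind (Q j) (\<lambda>z. f z - g z))"
      unfolding mult_ind_diff using fg sq_int_mult_ind[OF Q(3)] by (intro l2norm_reverse_triangle) auto
    from power_mono[OF this abs_ge_zero, of 2] show ?thesis by simp
  qed
  then have "(\<Sum>j. ennreal ((l2norm M (mult_ind (Q j) f) - l2norm M (mult_ind (Q j) g))\<^sup>2))
      \<le> (\<Sum>j. ennreal ((l2norm M (mult_ind (Q j) (\<lambda>z. f z - g z)))\<^sup>2))"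
    by (intro suminf_le summableI ennreal_leI)
  also have "\<dots> = ennreal ((l2norm M (\<lambda>z. f z - g z))\<^sup>2)"
    using Q fg by (intro suminf_l2norm_power2_mult_ind sq_int_diff)
  finally show ?thesis .
qed

context property_A_space
begin

lemma borel_measurable_l2norm_mult_ind:
  assumes \<phi>: "l2_borel_map M \<phi>" and Q: "Q \<in> sets M"
  shows "(\<lambda>x. l2norm M (mult_ind Q (\<phi> x))) \<in> borel_measurable M"
proof (rule borel_measurableI)
  fix S :: "real set" assume "open S"
  define U where "U = {g. sq_int M g \<and> l2norm M (mult_ind Q g) \<in> S}"
  have "l2_open M U" unfolding l2_open_def
  proof (intro ballI impI)
    fix g assume "g \<in> U" "sq_int M g"
    then obtain e where "e > 0" and e: "ball (l2norm M (mult_ind Q g)) e \<subseteq> S"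
      using \<open>open S\<close> open_contains_ball unfolding U_def by blast
    have "h \<in> U" if h: "sq_int M h" "l2norm M (\<lambda>x. h x - g x) < e" for h
    proof -
      have "\<bar>l2norm M (mult_ind Q h) - l2norm M (mult_ind Q g)\<bar>
          \<le> l2norm M (\<lambda>x. mult_ind Q h x - mult_ind Q g x)"
        using h(1) \<open>sq_int M g\<close> sq_int_mult_ind[OF Q] by (intro l2norm_reverse_triangle) auto
      also have "\<dots> \<le> l2norm M (\<lambda>x. h x - g x)"
        unfolding mult_ind_diff[symmetric] using Q h(1) \<open>sq_int M g\<close>
        by (intro l2norm_mult_ind_le sq_int_diff)
      finally show ?thesis using e h unfolding U_def by (auto simp: dist_real_def)
    qed
    then show "\<exists>e>0. \<forall>h. sq_int M h \<and> l2norm M (\<lambda>x. h x - g x) < e \<longrightarrow> h \<in> U"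
      using \<open>e > 0\<close> by blast
  qed
  then have "{x. \<phi> x \<in> U} \<in> sets M" using \<phi> unfolding l2_borel_map_def by auto
  moreover have "{x. \<phi> x \<in> U} = (\<lambda>x. l2norm M (mult_ind Q (\<phi> x))) -` S \<inter> space M"
    using \<phi> unfolding U_def l2_borel_map_def by auto
  ultimately show "(\<lambda>x. l2norm M (mult_ind Q (\<phi> x))) -` S \<inter> space M \<in> sets M" by simp
qed

text \<open>Restricting the Property A map \<open>\<phi>\<close> to the pieces \<open>Q j\<close> of a partition into small sets turns
  it into a square partition of unity \<open>\<psi> j x = \<parallel>\<one>\<^sub>Q\<^sub>j \<phi> x\<parallel>\<close> whose variation is controlled by that of \<open>\<phi>\<close>.\<close>
lemma square_partition_of_unity:
  assumes "\<eta> > 0" "r > 0"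
  obtains \<psi> :: "nat \<Rightarrow> 'a \<Rightarrow> real" and d :: "nat \<Rightarrow> 'a" and s :: real where
    "\<And>j. \<psi> j \<in> borel_measurable M" "\<And>j y. \<bar>\<psi> j y\<bar> \<le> 1"
    "\<And>y. (\<Sum>j. ennreal ((\<psi> j y)\<^sup>2)) = 1"
    "\<And>x y. dist x y \<le> r \<Longrightarrow> (\<Sum>j. ennreal ((\<psi> j x - \<psi> j y)\<^sup>2)) \<le> ennreal \<eta>"
    "\<And>j y. \<psi> j y \<noteq> 0 \<Longrightarrow> dist y (d j) \<le> s"
proof -
  have pos: "sqrt \<eta> > 0" "r + 1 > 0" using assms by auto
  obtain \<phi> :: "'a \<Rightarrow> 'a \<Rightarrow> complex" where
    \<phi>: "l2_borel_map M \<phi>" and unit: "\<And>x. l2norm M (\<phi> x) = 1"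
    and "\<exists>s. \<forall>x. AE y in M. y \<notin> cball x s \<longrightarrow> \<phi> x y = 0"
    and var: "\<And>x y. dist x y < r + 1 \<Longrightarrow> l2norm M (\<lambda>z. \<phi> x z - \<phi> y z) < sqrt \<eta>"
    using property_A[unfolded property_A_def, rule_format, OF pos] by blast
  then obtain s0 where supp: "\<And>x. AE y in M. y \<notin> cball x s0 \<longrightarrow> \<phi> x y = 0" by blast
  have \<phi>_sq: "sq_int M (\<phi> x)" for x using \<phi> unfolding l2_borel_map_def by blast
  obtain d :: "nat \<Rightarrow> 'a" and Q where Q: "disjoint_family Q" "\<And>y. \<exists>i. y \<in> Q i"
    "\<And>i. Q i \<subseteq> ball (d i) (1/2)" "\<And>i. Q i \<in> sets M"
    using ball_partition by blast
  define \<psi> where "\<psi> j x = l2norm M (mult_ind (Q j) (\<phi> x))" for j x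
  have dist_le: "(\<Sum>j. ennreal ((\<psi> j x - \<psi> j y)\<^sup>2)) \<le> ennreal \<eta>" if "dist x y \<le> r" for x y
  proof -
    have "(\<Sum>j. ennreal ((\<psi> j x - \<psi> j y)\<^sup>2)) \<le> ennreal ((l2norm M (\<lambda>z. \<phi> x z - \<phi> y z))\<^sup>2)"
      unfolding \<psi>_def by (rule suminf_l2norm_mult_ind_diff_le[OF Q(1,2,4) \<phi>_sq \<phi>_sq])
    also have "\<dots> \<le> ennreal ((sqrt \<eta>)\<^sup>2)"
      using var[of x y] that by (intro ennreal_leI power_mono) auto
    also have "\<dots> = ennreal \<eta>" using assms(1) by simp
    finally show ?thesis .
  qed
  have support: "dist y (d j) \<le> s0 + 1" if "\<psi> j y \<noteq> 0" for j y
  proof (rule ccontr)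
    assume far: "\<not> dist y (d j) \<le> s0 + 1"
    have "AE z in M. mult_ind (Q j) (\<phi> y) z = 0"
      using supp[of y]
    proof eventually_elim
      case (elim z)
      show ?case
      proof (cases "z \<in> Q j")
        case True
        then have "dist (d j) z < 1/2" using Q(3)[of j] by auto
        then have "z \<notin> cball y s0" using far dist_triangle[of y "d j" z] by (auto simp: dist_commute)
        then show ?thesis using elim by (simp add: mult_ind_def)
      qed (simp add: mult_ind_def)
    qed
    then have "\<psi> j y = l2norm M (\<lambda>z. 0)"
      unfolding \<psi>_def using \<phi>_sq[of y] Q(4)[of j] by (intro l2norm_AE_cong) (auto simp: sq_int_def)
    then show False using that by simp
  qed
  show ?thesis
  proof (rule that[of \<psi> d "s0 + 1"])
    show "\<psi> j \<in> borel_measurable M" for j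
      unfolding \<psi>_def by (rule borel_measurable_l2norm_mult_ind[OF \<phi> Q(4)])
    show "\<bar>\<psi> j y\<bar> \<le> 1" for j y
      unfolding \<psi>_def using l2norm_mult_ind_le[OF Q(4) \<phi>_sq, of j y] unit[of y] by simp
    show "(\<Sum>j. ennreal ((\<psi> j y)\<^sup>2)) = 1" for y
      unfolding \<psi>_def using suminf_l2norm_power2_mult_ind[OF Q(1,2,4) \<phi>_sq, of y] unit by simp
  qed (use dist_le support in auto)
qed

end


section \<open>Localisation by a square partition of unity\<close>

lemma nn_integral_power2_partition_split:
  fixes \<psi> :: "nat \<Rightarrow> 'a \<Rightarrow> real" and u :: "'a \<Rightarrow> complex" and a c :: "nat \<Rightarrow> 'a \<Rightarrow> complex"
  assumes unit: "\<And>z. (\<Sum>j. ennreal ((\<psi> j z)\<^sup>2)) = 1"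
    and [measurable]: "\<And>j. a j \<in> borel_measurable M" "\<And>j. c j \<in> borel_measurable M"
    and split: "\<And>j z. cmod (complex_of_real (\<psi> j z) * u z) \<le> cmod (a j z) + cmod (c j z)"
  shows "(\<integral>\<^sup>+z. ennreal ((cmod (u z))\<^sup>2) \<partial>M)
    \<le> 2 * (\<Sum>j. \<integral>\<^sup>+z. ennreal ((cmod (a j z))\<^sup>2) \<partial>M) + 2 * (\<integral>\<^sup>+z. (\<Sum>j. ennreal ((cmod (c j z))\<^sup>2)) \<partial>M)"
proof -
  have pointwise: "ennreal ((\<psi> j z)\<^sup>2) * ennreal ((cmod (u z))\<^sup>2)
      \<le> 2 * ennreal ((cmod (a j z))\<^sup>2) + 2 * ennreal ((cmod (c j z))\<^sup>2)" for j z
  proof -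
    have "(\<psi> j z)\<^sup>2 * (cmod (u z))\<^sup>2 = (cmod (complex_of_real (\<psi> j z) * u z))\<^sup>2"
      by (simp add: norm_mult power_mult_distrib)
    also have "\<dots> \<le> (cmod (a j z) + cmod (c j z))\<^sup>2" by (rule power_mono[OF split norm_ge_zero])
    also have "\<dots> \<le> 2 * (cmod (a j z))\<^sup>2 + 2 * (cmod (c j z))\<^sup>2" by (rule power2_sum_le)
    finally have "ennreal ((\<psi> j z)\<^sup>2 * (cmod (u z))\<^sup>2) \<le> ennreal (2 * (cmod (a j z))\<^sup>2 + 2 * (cmod (c j z))\<^sup>2)"
      by (rule ennreal_leI)
    then show ?thesis by (simp add: ennreal_mult'')
  qed
  have "(\<integral>\<^sup>+z. ennreal ((cmod (u z))\<^sup>2) \<partial>M) = (\<integral>\<^sup>+z. (\<Sum>j. ennreal ((\<psi> j z)\<^sup>2) * ennreal ((cmod (u z))\<^sup>2)) \<partial>M)"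
    by (simp add: ennreal_suminf_multc unit)
  also have "\<dots> \<le> (\<integral>\<^sup>+z. 2 * (\<Sum>j. ennreal ((cmod (a j z))\<^sup>2)) + 2 * (\<Sum>j. ennreal ((cmod (c j z))\<^sup>2)) \<partial>M)"
    by (intro nn_integral_mono order_trans[OF suminf_le[OF pointwise summableI summableI]])
      (simp add: suminf_add[symmetric])
  also have "\<dots> = 2 * (\<Sum>j. \<integral>\<^sup>+z. ennreal ((cmod (a j z))\<^sup>2) \<partial>M) + 2 * (\<integral>\<^sup>+z. (\<Sum>j. ennreal ((cmod (c j z))\<^sup>2)) \<partial>M)"
    by (simp add: nn_integral_add nn_integral_cmult nn_integral_suminf)
  finally show ?thesis .
qed

context controlled_kernel
begin

lemma commutator_suminf_le:
  fixes \<psi> :: "nat \<Rightarrow> 'a \<Rightarrow> real"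
  assumes f: "sq_int M f" and C: "\<And>x. emeasure M (cball x r0) \<le> ennreal C"
    and \<psi>: "\<And>j. \<psi> j \<in> borel_measurable M" "\<And>j y. \<bar>\<psi> j y\<bar> \<le> 1"
    and variation: "\<And>y. dist x y \<le> r0 \<Longrightarrow> (\<Sum>j. ennreal ((\<psi> j x - \<psi> j y)\<^sup>2)) \<le> ennreal \<eta>"
  shows "(\<Sum>j. ennreal ((cmod (complex_of_real (\<psi> j x) * Op M k f x - Op M k (\<lambda>y. complex_of_real (\<psi> j y) * f y) x))\<^sup>2))
     \<le> ennreal C * ennreal (K\<^sup>2) * ennreal \<eta> * (\<integral>\<^sup>+y. indicator (cball x r0) y * ennreal ((cmod (f y))\<^sup>2) \<partial>M)"
proof -
  have [measurable]: "f \<in> borel_measurable M" "\<And>j. \<psi> j \<in> borel_measurable M"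
    using f \<psi>(1) by (auto simp: sq_int_def)
  define h where "h j y = complex_of_real (\<psi> j x - \<psi> j y) * k x y * f y" for j y
  define Z where "Z y = ennreal (K\<^sup>2) * (indicator (cball x r0) y * ennreal ((cmod (f y))\<^sup>2))" for y
  text \<open>The commutator \<open>[\<psi>\<^sub>j, Op k]\<close> is again an integral operator, with kernel \<open>(\<psi>\<^sub>j x - \<psi>\<^sub>j y) k x y\<close>.\<close>
  have commutator: "complex_of_real (\<psi> j x) * Op M k f x - Op M k (\<lambda>y. complex_of_real (\<psi> j y) * f y) x
      = integral\<^sup>L M (h j)" for j
  proof -
    have "complex_of_real (\<psi> j x) * Op M k f x - Op M k (\<lambda>y. complex_of_real (\<psi> j y) * f y) x
       = (\<integral>y. complex_of_real (\<psi> j x) * (k x y * f y) \<partial>M) - (\<integral>y. k x y * (complex_of_real (\<psi> j y) * f y) \<partial>M)"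
      unfolding Op_def by simp
    also have "\<dots> = (\<integral>y. complex_of_real (\<psi> j x) * (k x y * f y) - k x y * (complex_of_real (\<psi> j y) * f y) \<partial>M)"
      using integrable_kernel_mult[OF f, of x] integrable_kernel_mult[OF sq_int_of_real_mult[OF f \<psi>(1,2)], of x]
      by simp
    also have "\<dots> = integral\<^sup>L M (h j)"
      unfolding h_def by (rule Bochner_Integration.integral_cong) (auto simp: algebra_simps)
    finally show ?thesis .
  qed
  have "integrable M (h j)" for j
  proof -
    have "cmod (complex_of_real (\<psi> j x - \<psi> j y) * k x y) \<le> 2 * K" for y
      using \<psi>(2)[of j x] \<psi>(2)[of j y] kernel_bound[of x y] kernel_bound_nonneg unfolding norm_mult norm_of_real
      by (intro mult_mono) auto
    then show ?thesis unfolding h_def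
      by (intro integrable_bounded_cball_mult[OF f, of _ "2 * K" x r0]) (auto simp: kernel_vanishes_outside)
  qed
  then have "ennreal ((cmod (integral\<^sup>L M (h j)))\<^sup>2) \<le> ennreal C * (\<integral>\<^sup>+y. ennreal ((\<psi> j x - \<psi> j y)\<^sup>2) * Z y \<partial>M)" for j
  proof (intro order_trans[OF cmod_integral_power2_le mult_mono[OF C[of x] nn_integral_mono]])
    fix y
    show "ennreal ((cmod (h j y))\<^sup>2) \<le> ennreal ((\<psi> j x - \<psi> j y)\<^sup>2) * Z y"
    proof (cases "y \<in> cball x r0")
      case True
      have "(cmod (h j y))\<^sup>2 = (\<psi> j x - \<psi> j y)\<^sup>2 * ((cmod (k x y))\<^sup>2 * (cmod (f y))\<^sup>2)"
        unfolding h_def norm_mult power_mult_distrib norm_of_real power2_abs by simp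
      also have "\<dots> \<le> (\<psi> j x - \<psi> j y)\<^sup>2 * (K\<^sup>2 * (cmod (f y))\<^sup>2)"
        by (intro mult_left_mono mult_right_mono power_mono kernel_bound) auto
      finally have "ennreal ((cmod (h j y))\<^sup>2) \<le> ennreal ((\<psi> j x - \<psi> j y)\<^sup>2 * (K\<^sup>2 * (cmod (f y))\<^sup>2))"
        by (rule ennreal_leI)
      then show ?thesis using True unfolding Z_def by (simp add: ennreal_mult)
    qed (simp add: h_def kernel_vanishes_outside Z_def)
  qed (auto simp: h_def kernel_vanishes_outside)
  then have "(\<Sum>j. ennreal ((cmod (complex_of_real (\<psi> j x) * Op M k f x - Op M k (\<lambda>y. complex_of_real (\<psi> j y) * f y) x))\<^sup>2))
      \<le> (\<Sum>j. ennreal C * (\<integral>\<^sup>+y. ennreal ((\<psi> j x - \<psi> j y)\<^sup>2) * Z y \<partial>M))"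
    unfolding commutator by (intro suminf_le summableI)
  also have "\<dots> = ennreal C * (\<integral>\<^sup>+y. (\<Sum>j. ennreal ((\<psi> j x - \<psi> j y)\<^sup>2) * Z y) \<partial>M)"
    unfolding Z_def by (subst nn_integral_suminf) auto
  also have "\<dots> \<le> ennreal C * (\<integral>\<^sup>+y. ennreal \<eta> * Z y \<partial>M)"
  proof (intro mult_left_mono nn_integral_mono)
    fix y
    show "(\<Sum>j. ennreal ((\<psi> j x - \<psi> j y)\<^sup>2) * Z y) \<le> ennreal \<eta> * Z y"
    proof (cases "y \<in> cball x r0")
      case True
      then show ?thesis unfolding ennreal_suminf_multc by (intro mult_right_mono variation) auto
    qed (simp add: Z_def)
  qed simp
  also have "\<dots> = ennreal C * ennreal (K\<^sup>2) * ennreal \<eta> * (\<integral>\<^sup>+y. indicator (cball x r0) y * ennreal ((cmod (f y))\<^sup>2) \<partial>M)"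
    unfolding Z_def by (subst nn_integral_cmult, measurable)+ (simp add: mult_ac)
  finally show ?thesis .
qed

lemma commutator_bound:
  obtains C where "C \<ge> 0" "\<And>\<psi> \<eta> f. (\<And>j. \<psi> j \<in> borel_measurable M) \<Longrightarrow> (\<And>j y. \<bar>\<psi> j y\<bar> \<le> 1) \<Longrightarrow>
      (\<And>x y. dist x y \<le> r0 \<Longrightarrow> (\<Sum>j. ennreal ((\<psi> j x - \<psi> j y)\<^sup>2)) \<le> ennreal \<eta>) \<Longrightarrow> \<eta> \<ge> 0 \<Longrightarrow>
      sq_int M f \<Longrightarrow>
      (\<integral>\<^sup>+x. (\<Sum>j. ennreal ((cmod (complex_of_real (\<psi> j x) * Op M k f x
          - Op M k (\<lambda>y. complex_of_real (\<psi> j y) * f y) x))\<^sup>2)) \<partial>M)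
        \<le> ennreal (C * \<eta> * (l2norm M f)\<^sup>2)"
proof -
  obtain C1 where C1: "C1 \<ge> 0" "\<And>x. emeasure M (cball x r0) \<le> ennreal C1"
    using uniform_cball_bound by blast
  obtain C2 where C2: "C2 \<ge> 0" "\<And>(g::'a \<Rightarrow> ennreal) (h::'a \<Rightarrow> ennreal) a. g \<in> borel_measurable M \<Longrightarrow>
      (\<And>x. h x \<le> a * (\<integral>\<^sup>+y. indicator (cball x r0) y * g y \<partial>M)) \<Longrightarrow>
      (\<integral>\<^sup>+x. h x \<partial>M) \<le> a * ennreal C2 * (\<integral>\<^sup>+y. g y \<partial>M)"
    using nn_integral_cball_average_le[where R = r0] by blast
  show ?thesis
  proof (rule that[of "C1 * K\<^sup>2 * C2"])
    show "C1 * K\<^sup>2 * C2 \<ge> 0" using C1(1) C2(1) by simp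
    fix \<psi> :: "nat \<Rightarrow> 'a \<Rightarrow> real" and \<eta> f
    assume \<psi>: "\<And>j. \<psi> j \<in> borel_measurable M" "\<And>j y. \<bar>\<psi> j y\<bar> \<le> 1"
      and variation: "\<And>x y. dist x y \<le> r0 \<Longrightarrow> (\<Sum>j. ennreal ((\<psi> j x - \<psi> j y)\<^sup>2)) \<le> ennreal \<eta>"
      and "\<eta> \<ge> 0" and f: "sq_int M f"
    have [measurable]: "f \<in> borel_measurable M" by (rule sq_int_borel_measurable[OF f])
    have "(\<integral>\<^sup>+x. (\<Sum>j. ennreal ((cmod (complex_of_real (\<psi> j x) * Op M k f x
          - Op M k (\<lambda>y. complex_of_real (\<psi> j y) * f y) x))\<^sup>2)) \<partial>M)
        \<le> ennreal C1 * ennreal (K\<^sup>2) * ennreal \<eta> * ennreal C2 * (\<integral>\<^sup>+y. ennreal ((cmod (f y))\<^sup>2) \<partial>M)"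
      by (rule C2(2)) (auto intro: commutator_suminf_le[OF f C1(2) \<psi> variation])
    also have "\<dots> = ennreal (C1 * K\<^sup>2 * C2 * \<eta> * (l2norm M f)\<^sup>2)"
      using C1(1) C2(1) \<open>\<eta> \<ge> 0\<close> by (simp add: l2norm_power2_nn_integral[OF f] ennreal_mult' mult_ac)
    finally show "(\<integral>\<^sup>+x. (\<Sum>j. ennreal ((cmod (complex_of_real (\<psi> j x) * Op M k f x
          - Op M k (\<lambda>y. complex_of_real (\<psi> j y) * f y) x))\<^sup>2)) \<partial>M)
        \<le> ennreal (C1 * K\<^sup>2 * C2 * \<eta> * (l2norm M f)\<^sup>2)" .
  qed
qed

text \<open>Writing \<open>\<psi>\<^sub>j \<one>\<^sub>F Op k f = \<one>\<^sub>F Op k (\<psi>\<^sub>j f) + \<one>\<^sub>F [\<psi>\<^sub>j, Op k] f\<close> and summing squares over \<open>j\<close>.\<close>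
lemma l2norm_mult_ind_Op_partition_le:
  fixes \<psi> :: "nat \<Rightarrow> 'a \<Rightarrow> real"
  assumes F: "F \<in> sets M" and f: "sq_int M f"
    and \<psi>: "\<And>j. \<psi> j \<in> borel_measurable M" "\<And>j y. \<bar>\<psi> j y\<bar> \<le> 1" "\<And>y. (\<Sum>j. ennreal ((\<psi> j y)\<^sup>2)) = 1"
    and pieces: "\<And>j. l2norm M (mult_ind F (Op M k (\<lambda>y. complex_of_real (\<psi> j y) * f y)))
      \<le> c * l2norm M (\<lambda>y. complex_of_real (\<psi> j y) * f y)" "c \<ge> 0"
    and commutator: "(\<integral>\<^sup>+x. (\<Sum>j. ennreal ((cmod (complex_of_real (\<psi> j x) * Op M k f x
          - Op M k (\<lambda>y. complex_of_real (\<psi> j y) * f y) x))\<^sup>2)) \<partial>M) \<le> ennreal (D * (l2norm M f)\<^sup>2)"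
      "D \<ge> 0"
  shows "(l2norm M (mult_ind F (Op M k f)))\<^sup>2 \<le> (2 * c\<^sup>2 + 2 * D) * (l2norm M f)\<^sup>2"
proof -
  define g where "g = (\<lambda>j y. complex_of_real (\<psi> j y) * f y)"
  have g: "sq_int M (g j)" for j unfolding g_def by (rule sq_int_of_real_mult[OF f \<psi>(1,2)])
  have [measurable]: "F \<in> sets M" "\<And>j. Op M k (g j) \<in> borel_measurable M" "Op M k f \<in> borel_measurable M"
    using F g f by auto
  have commutator_measurable:
    "\<And>j. (\<lambda>z. complex_of_real (\<psi> j z) * Op M k f z - Op M k (g j) z) \<in> borel_measurable M"
    using \<psi>(1) by measurable
  have commutator_g: "(\<integral>\<^sup>+x. (\<Sum>j. ennreal ((cmod (complex_of_real (\<psi> j x) * Op M k f x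
      - Op M k (g j) x))\<^sup>2)) \<partial>M) \<le> ennreal (D * (l2norm M f)\<^sup>2)"
    using commutator(1) by (simp add: g_def)
  note split = nn_integral_power2_partition_split[OF \<psi>(3) _ commutator_measurable, of "\<lambda>j. mult_ind F (Op M k (g j))"]
  have pieces_sum: "(\<Sum>j. ennreal ((l2norm M (mult_ind F (Op M k (g j))))\<^sup>2)) \<le> ennreal (c\<^sup>2 * (l2norm M f)\<^sup>2)"
  proof -
    have "(\<Sum>j. ennreal ((l2norm M (mult_ind F (Op M k (g j))))\<^sup>2)) \<le> (\<Sum>j. ennreal (c\<^sup>2) * ennreal ((l2norm M (g j))\<^sup>2))"
      using pieces by (intro suminf_le summableI) (simp add: g_def ennreal_mult'[symmetric] power_mult_distrib[symmetric] power_mono)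
    also have "\<dots> = ennreal (c\<^sup>2 * (l2norm M f)\<^sup>2)"
      unfolding ennreal_suminf_cmult g_def suminf_l2norm_power2_partition[OF \<psi>(1,2,3) f]
      by (simp add: ennreal_mult')
    finally show ?thesis .
  qed
  have "ennreal ((l2norm M (mult_ind F (Op M k f)))\<^sup>2)
      \<le> 2 * (\<Sum>j. ennreal ((l2norm M (mult_ind F (Op M k (g j))))\<^sup>2)) + 2 * ennreal (D * (l2norm M f)\<^sup>2)"
  proof (subst l2norm_power2_nn_integral[OF sq_int_mult_ind[OF F sq_int_Op[OF f]]],
      intro order_trans[OF split] add_mono mult_left_mono order_refl commutator_g)
    fix j z
    have "complex_of_real (\<psi> j z) * mult_ind F (Op M k f) z
        = mult_ind F (Op M k (g j)) z + indicator F z * (complex_of_real (\<psi> j z) * Op M k f z - Op M k (g j) z)"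
      by (simp add: mult_ind_def algebra_simps)
    then show "cmod (complex_of_real (\<psi> j z) * mult_ind F (Op M k f) z)
        \<le> cmod (mult_ind F (Op M k (g j)) z) + cmod (complex_of_real (\<psi> j z) * Op M k f z - Op M k (g j) z)"
      using norm_triangle_ineq[of "mult_ind F (Op M k (g j)) z"] by (auto simp: indicator_def)
    show "(\<Sum>j. \<integral>\<^sup>+z. ennreal ((cmod (mult_ind F (Op M k (g j)) z))\<^sup>2) \<partial>M)
        \<le> (\<Sum>j. ennreal ((l2norm M (mult_ind F (Op M k (g j))))\<^sup>2))"
      using l2norm_power2_nn_integral[OF sq_int_mult_ind[OF F sq_int_Op[OF g]]] by simp
  qed (use commutator_g in auto)
  also have "\<dots> \<le> 2 * ennreal (c\<^sup>2 * (l2norm M f)\<^sup>2) + 2 * ennreal (D * (l2norm M f)\<^sup>2)"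
    using pieces_sum by (intro add_mono mult_left_mono) auto
  also have "2 * ennreal (c\<^sup>2 * (l2norm M f)\<^sup>2) + 2 * ennreal (D * (l2norm M f)\<^sup>2)
      = ennreal ((2 * c\<^sup>2 + 2 * D) * (l2norm M f)\<^sup>2)"
  proof -
    have "ennreal ((2 * c\<^sup>2 + 2 * D) * (l2norm M f)\<^sup>2)
        = ennreal (2 * (c\<^sup>2 * (l2norm M f)\<^sup>2) + 2 * (D * (l2norm M f)\<^sup>2))"
      by (simp add: algebra_simps)
    also have "\<dots> = ennreal (2 * (c\<^sup>2 * (l2norm M f)\<^sup>2)) + ennreal (2 * (D * (l2norm M f)\<^sup>2))"
      using \<open>D \<ge> 0\<close> by (intro ennreal_plus) auto
    also have "\<dots> = 2 * ennreal (c\<^sup>2 * (l2norm M f)\<^sup>2) + 2 * ennreal (D * (l2norm M f)\<^sup>2)"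
      by (simp add: ennreal_mult')
    finally show ?thesis ..
  qed
  finally show ?thesis using \<open>D \<ge> 0\<close> by (simp add: ennreal_le_iff)
qed

end


section \<open>Operators approximated by a controlled kernel\<close>

locale kernel_approx = controlled_kernel M k K r0 for M :: "'a::metric_space measure" and k K r0 +
  fixes T :: "'a op" and e :: real
  assumes bounded_T: "bounded_op M T" and approx_pos: "e > 0"
    and approx: "\<And>f. sq_int M f \<Longrightarrow> l2norm M (\<lambda>x. T f x - Op M k f x) \<le> e * l2norm M f"
begin

lemma sq_int_approx_error: "sq_int M f \<Longrightarrow> sq_int M (\<lambda>x. T f x - Op M k f x)"
  by (rule sq_int_diff[OF bounded_op_sq_int[OF bounded_T] sq_int_Op])

lemma approx_unit:
  assumes "sq_int M f" "l2norm M f \<le> 1"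
  shows "l2norm M (\<lambda>x. T f x - Op M k f x) \<le> e"
proof -
  have "e * l2norm M f \<le> e" using mult_left_mono[OF assms(2), of e] approx_pos by simp
  then show ?thesis using approx[OF assms(1)] by linarith
qed

lemma l2norm_mult_ind_T_le:
  assumes F: "F \<in> sets M" and f: "sq_int M f" "l2norm M f \<le> 1"
  shows "l2norm M (mult_ind F (T f)) \<le> e + l2norm M (mult_ind F (Op M k f))"
proof -
  have split: "mult_ind F (T f) = (\<lambda>z. mult_ind F (\<lambda>z. T f z - Op M k f z) z + mult_ind F (Op M k f) z)"
    by (auto simp: mult_ind_def algebra_simps)
  have "l2norm M (mult_ind F (T f))
      \<le> l2norm M (mult_ind F (\<lambda>z. T f z - Op M k f z)) + l2norm M (mult_ind F (Op M k f))"
    by (subst split)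
      (rule l2norm_triangle[OF sq_int_mult_ind[OF F sq_int_approx_error[OF f(1)]] sq_int_mult_ind[OF F sq_int_Op[OF f(1)]]])
  then show ?thesis
    using l2norm_mult_ind_le[OF F sq_int_approx_error[OF f(1)]] approx_unit[OF f] by linarith
qed

lemma l2norm_mult_ind_Op_le:
  assumes g: "sq_int M g" and F: "F \<in> sets M" and B: "B \<in> sets M"
    and vanishes: "\<And>z. z \<notin> B \<Longrightarrow> Op M k g z = 0" and small: "opnorm M (ind_op B T) \<le> e"
  shows "l2norm M (mult_ind F (Op M k g)) \<le> 2 * e * l2norm M g"
proof -
  have "l2norm M (mult_ind F (Op M k g)) \<le> l2norm M (mult_ind B (Op M k g))"
  proof (rule l2norm_mono)
    show "sq_int M (mult_ind B (Op M k g))" by (rule sq_int_mult_ind[OF B sq_int_Op[OF g]])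
    show "mult_ind F (Op M k g) \<in> borel_measurable M" using F g by measurable
    show "cmod (mult_ind F (Op M k g) x) \<le> cmod (mult_ind B (Op M k g) x)" for x
      using vanishes[of x] by (cases "x \<in> B") (auto simp: mult_ind_def indicator_def)
  qed
  also have "mult_ind B (Op M k g) = (\<lambda>x. mult_ind B (T g) x - mult_ind B (\<lambda>x. T g x - Op M k g x) x)"
    by (auto simp: mult_ind_def algebra_simps)
  also have "l2norm M \<dots> \<le> l2norm M (mult_ind B (T g)) + l2norm M (mult_ind B (\<lambda>x. T g x - Op M k g x))"
    using B g by (intro l2norm_triangle_diff sq_int_mult_ind bounded_op_sq_int[OF bounded_T] sq_int_approx_error)
  also have "\<dots> \<le> e * l2norm M g + e * l2norm M g"
  proof (rule add_mono)
    show "l2norm M (mult_ind B (T g)) \<le> e * l2norm M g"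
      using l2norm_le_opnorm[OF bounded_op_ind_op[OF bounded_T B] g] small
      by (meson mult_right_mono l2norm_nonneg order_trans)
    show "l2norm M (mult_ind B (\<lambda>x. T g x - Op M k g x)) \<le> e * l2norm M g"
      using l2norm_mult_ind_le[OF B sq_int_approx_error[OF g]] approx[OF g] by linarith
  qed
  finally show ?thesis by simp
qed

text \<open>Since \<open>Op k\<close> has propagation \<open>r0\<close>, on \<open>cball x r\<close> the operator \<open>T\<close> only sees \<open>f\<close> on
  \<open>cball x (r + r0)\<close>, up to the approximation error.\<close>
lemma opnorm_ind_op_le:
  assumes small: "opnorm M (op_ind T (cball x (r + r0))) < e"
  shows "opnorm M (ind_op (cball x r) T) \<le> 3 * e"
proof (rule opnorm_least)
  fix f assume f: "sq_int M f" "l2norm M f \<le> 1"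
  define g where "g = mult_ind (cball x (r + r0)) f"
  have g: "sq_int M g" "l2norm M g \<le> 1"
    unfolding g_def using sq_int_mult_ind[OF cball_sets f(1)] order_trans[OF l2norm_mult_ind_le[OF cball_sets f(1)] f(2)]
    by auto
  have local: "mult_ind (cball x r) (Op M k f) = mult_ind (cball x r) (Op M k g)"
  proof (rule ext)
    fix z show "mult_ind (cball x r) (Op M k f) z = mult_ind (cball x r) (Op M k g) z"
      using Op_local[of z x r f] unfolding g_def by (cases "z \<in> cball x r") (simp_all add: mult_ind_def)
  qed
  have "l2norm M (Op M k g) \<le> l2norm M (T g) + l2norm M (\<lambda>z. T g z - Op M k g z)"
    using l2norm_triangle_diff[OF bounded_op_sq_int[OF bounded_T g(1)] sq_int_approx_error[OF g(1)]] by simp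
  also have "\<dots> \<le> e + e"
  proof (rule add_mono)
    have "l2norm M (T g) \<le> opnorm M (op_ind T (cball x (r + r0)))"
      unfolding g_def by (rule l2norm_le_opnorm_unit[OF bounded_op_op_ind[OF bounded_T cball_sets] f])
    then show "l2norm M (T g) \<le> e" using small by linarith
    show "l2norm M (\<lambda>z. T g z - Op M k g z) \<le> e" by (rule approx_unit[OF g])
  qed
  finally have "l2norm M (mult_ind (cball x r) (Op M k f)) \<le> e + e"
    unfolding local using l2norm_mult_ind_le[OF cball_sets sq_int_Op[OF g(1)], of x r] by linarith
  then show "l2norm M (mult_ind (cball x r) (T f)) \<le> 3 * e"
    using l2norm_mult_ind_T_le[OF cball_sets[of x r] f] by linarith
qed

lemma opnorm_op_ind_le:
  assumes small: "opnorm M (ind_op (cball x (r + r0)) T) < e"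
  shows "opnorm M (op_ind T (cball x r)) \<le> 3 * e"
proof (rule opnorm_least)
  fix f assume f: "sq_int M f" "l2norm M f \<le> 1"
  define g where "g = mult_ind (cball x r) f"
  have g: "sq_int M g" "l2norm M g \<le> 1"
    unfolding g_def using sq_int_mult_ind[OF cball_sets f(1)] order_trans[OF l2norm_mult_ind_le[OF cball_sets f(1)] f(2)]
    by auto
  have vanishes: "Op M k g z = 0" if "z \<notin> cball x (r + r0)" for z
    using that unfolding g_def by (intro Op_vanishes_outside) (auto simp: mult_ind_def)
  have split: "T g = (\<lambda>z. (T g z - Op M k g z) + mult_ind (cball x (r + r0)) (Op M k g) z)"
  proof (rule ext)
    fix z show "T g z = (T g z - Op M k g z) + mult_ind (cball x (r + r0)) (Op M k g) z"
    proof (cases "z \<in> cball x (r + r0)")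
      case False
      then show ?thesis using vanishes[OF False] unfolding mult_ind_def by simp
    qed (simp add: mult_ind_def)
  qed
  have "l2norm M (T g) \<le> l2norm M (\<lambda>z. T g z - Op M k g z) + l2norm M (mult_ind (cball x (r + r0)) (Op M k g))"
    by (subst split) (rule l2norm_triangle[OF sq_int_approx_error[OF g(1)] sq_int_mult_ind[OF cball_sets sq_int_Op[OF g(1)]]])
  also have "\<dots> \<le> e + 2 * e"
  proof (rule add_mono)
    show "l2norm M (\<lambda>z. T g z - Op M k g z) \<le> e" by (rule approx_unit[OF g])
    have "l2norm M (mult_ind (cball x (r + r0)) (Op M k g)) \<le> 2 * e * l2norm M g"
      by (rule l2norm_mult_ind_Op_le[OF g(1) cball_sets cball_sets vanishes less_imp_le[OF small]])
    also have "\<dots> \<le> 2 * e" using g(2) approx_pos by simp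
    finally show "l2norm M (mult_ind (cball x (r + r0)) (Op M k g)) \<le> 2 * e" .
  qed
  finally show "l2norm M (T (mult_ind (cball x r) f)) \<le> 3 * e" unfolding g_def by simp
qed

end


lemma (in property_A_space) in_E_kernel_approx:
  assumes T: "in_E M T" and "e > 0"
  shows "\<exists>k K r0. kernel_approx M k K r0 T e"
proof -
  obtain k where "good_kernel k" and small: "opnorm M (\<lambda>f x. T f x - Op M k f x) < e"
    using assms unfolding in_E_def by blast
  obtain K r0 where k: "controlled_kernel M k K r0"
    using \<open>good_kernel k\<close> by (rule good_kernel_controlled)
  then interpret controlled_kernel M k K r0 .
  have bounded_T: "bounded_op M T" using T unfolding in_E_def by blast
  have bounded: "bounded_op M (\<lambda>f x. T f x - Op M k f x)"
    by (rule bounded_op_diff[OF bounded_T bounded_op_Op])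
  have "l2norm M (\<lambda>x. T f x - Op M k f x) \<le> e * l2norm M f" if "sq_int M f" for f
  proof -
    have "l2norm M (\<lambda>x. T f x - Op M k f x) \<le> opnorm M (\<lambda>f x. T f x - Op M k f x) * l2norm M f"
      by (rule l2norm_le_opnorm[OF bounded that])
    also have "\<dots> \<le> e * l2norm M f" using small by (intro mult_right_mono) auto
    finally show ?thesis .
  qed
  then have "kernel_approx M k K r0 T e"
    using k bounded_T \<open>e > 0\<close> by (intro kernel_approx.intro kernel_approx_axioms.intro)
  then show ?thesis by blast
qed


section \<open>Sets in \<open>co(\<xi>)\<close> on which an operator is small\<close>

lemma tendsto_zero_if_eventually_le:
  fixes f :: "'b \<Rightarrow> real"
  assumes "\<And>x. 0 \<le> f x" "\<And>e. e > 0 \<Longrightarrow> eventually (\<lambda>x. f x \<le> e) F"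
  shows "(f \<longlongrightarrow> 0) F"
proof (rule order_tendstoI)
  show "eventually (\<lambda>x. a < f x) F" if "a < 0" for a
    using assms(1) that by (intro always_eventually) (auto intro: less_le_trans)
  show "eventually (\<lambda>x. f x < a) F" if "a > 0" for a
    using assms(2)[of "a / 2"] that by (auto elim: eventually_mono)
qed

lemma cball_subset_of_inner_set: "x \<in> inner_set r F \<Longrightarrow> cball x r \<subseteq> F"
  unfolding inner_set_def by (force simp: subset_iff)

lemma UNIV_in_co_filter: "UNIV \<in> co_filter \<xi>"
  unfolding co_filter_def inner_set_def by (auto intro: always_eventually gt_ex)

lemma (in property_A_space) ball_union_in_co_filter:
  assumes T: "bounded_op M T" and lim: "\<forall>r>0. ((\<lambda>x. opnorm M (ind_op (cball x r) T)) \<longlongrightarrow> 0) \<xi>"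
    and "R > 0" "e > 0"
  shows "(\<Union>x\<in>{x. opnorm M (ind_op (cball x R) T) < e}. ball x 1) \<in> co_filter \<xi>"
  unfolding co_filter_def
proof (intro CollectI allI impI)
  fix r :: real assume "r > 0"
  have "R + r + 1 > 0" using \<open>R > 0\<close> \<open>r > 0\<close> by simp
  with lim have "eventually (\<lambda>x. opnorm M (ind_op (cball x (R + r + 1)) T) < e) \<xi>"
    using \<open>e > 0\<close> by (blast dest: order_tendstoD(2))
  then show "eventually (\<lambda>x. x \<in> inner_set r (\<Union>x\<in>{x. opnorm M (ind_op (cball x R) T) < e}. ball x 1)) \<xi>"
  proof (rule eventually_mono)
    fix x assume small: "opnorm M (ind_op (cball x (R + r + 1)) T) < e"
    have "r + 1 \<le> dist x y" if "y \<notin> (\<Union>x\<in>{x. opnorm M (ind_op (cball x R) T) < e}. ball x 1)" for y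
    proof (rule ccontr)
      assume "\<not> r + 1 \<le> dist x y"
      then have "cball y R \<subseteq> cball x (R + r + 1)"
      proof (intro subsetI)
        fix z assume "z \<in> cball y R" and "\<not> r + 1 \<le> dist x y"
        then show "z \<in> cball x (R + r + 1)" using dist_triangle[of x z y] by simp
      qed
      then have "opnorm M (ind_op (cball y R) T) < e"
        using opnorm_ind_op_mono[OF T] small by (meson cball_sets le_less_trans)
      then show False using that by force
    qed
    then show "x \<in> inner_set r (\<Union>x\<in>{x. opnorm M (ind_op (cball x R) T) < e}. ball x 1)"
      unfolding inner_set_def by (auto intro!: exI[of _ "r + 1"])
  qed
qed

context kernel_approx
begin

lemma l2norm_mult_ind_ball_union_Op_le:
  assumes g: "sq_int M g" "\<And>y. y \<notin> cball c s \<Longrightarrow> g y = 0" and R: "2 * s + 2 * r0 + 1 \<le> R"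
  shows "l2norm M (mult_ind (\<Union>x\<in>{x. opnorm M (ind_op (cball x R) T) < e}. ball x 1) (Op M k g))
    \<le> 2 * e * l2norm M g"
proof -
  define F where "F = (\<Union>x\<in>{x. opnorm M (ind_op (cball x R) T) < e}. ball x 1)"
  have F: "F \<in> sets M" unfolding F_def by (intro borel_sets borel_open open_UN) simp
  have vanishes: "Op M k g z = 0" if "z \<notin> cball c (s + r0)" for z
    by (rule Op_vanishes_outside[OF g(2) that])
  show ?thesis
  proof (cases "\<exists>y\<in>F. dist c y \<le> s + r0")
    case True
    then obtain x y where x: "opnorm M (ind_op (cball x R) T) < e" and y: "dist x y < 1" "dist c y \<le> s + r0"
      unfolding F_def by auto
    have "dist x z \<le> R" if "dist c z \<le> s + r0" for z
      using dist_triangle[of x z y] dist_triangle[of y z c] dist_commute[of y c] R that y by linarith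
    then have "Op M k g z = 0" if "z \<notin> cball x R" for z
      using vanishes[of z] that by auto
    then show ?thesis
      unfolding F_def by (rule l2norm_mult_ind_Op_le[OF g(1) F[unfolded F_def] cball_sets _ less_imp_le[OF x]])
  next
    case False
    have "mult_ind F (Op M k g) z = 0" for z
      using False vanishes[of z] by (cases "z \<in> F") (auto simp: mult_ind_def)
    then have "mult_ind F (Op M k g) = (\<lambda>z. 0)" by blast
    then show ?thesis using approx_pos unfolding F_def by simp
  qed
qed

text \<open>Cut a slowly varying square partition of unity at the balls where \<open>T\<close> is already small:
  each piece of \<open>Op k f\<close> lives near such a ball, and the error made by cutting is the commutator
  with the partition.\<close>
lemma co_filter_set_small:
  assumes lim: "\<forall>r>0. ((\<lambda>x. opnorm M (ind_op (cball x r) T)) \<longlongrightarrow> 0) \<xi>"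
  obtains F where "F \<in> sets M" "F \<in> co_filter \<xi>" "opnorm M (ind_op F T) \<le> 5 * e"
proof -
  obtain C where "C \<ge> 0" and commutator: "\<And>\<psi> \<eta> f. (\<And>j. \<psi> j \<in> borel_measurable M) \<Longrightarrow> (\<And>j y. \<bar>\<psi> j y\<bar> \<le> 1) \<Longrightarrow>
      (\<And>x y. dist x y \<le> r0 \<Longrightarrow> (\<Sum>j. ennreal ((\<psi> j x - \<psi> j y)\<^sup>2)) \<le> ennreal \<eta>) \<Longrightarrow> \<eta> \<ge> 0 \<Longrightarrow>
      sq_int M f \<Longrightarrow>
      (\<integral>\<^sup>+x. (\<Sum>j. ennreal ((cmod (complex_of_real (\<psi> j x) * Op M k f x
          - Op M k (\<lambda>y. complex_of_real (\<psi> j y) * f y) x))\<^sup>2)) \<partial>M)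
        \<le> ennreal (C * \<eta> * (l2norm M f)\<^sup>2)"
    using commutator_bound by blast
  define \<eta> where "\<eta> = e\<^sup>2 / (C + 1)"
  have "\<eta> > 0" and C\<eta>: "C * \<eta> \<le> e\<^sup>2"
    unfolding \<eta>_def using \<open>C \<ge> 0\<close> approx_pos by (auto simp: field_simps)
  obtain \<psi> :: "nat \<Rightarrow> 'a \<Rightarrow> real" and d s where
    \<psi>: "\<And>j. \<psi> j \<in> borel_measurable M" "\<And>j y. \<bar>\<psi> j y\<bar> \<le> 1" "\<And>y. (\<Sum>j. ennreal ((\<psi> j y)\<^sup>2)) = 1"
    and slow: "\<And>x y. dist x y \<le> r0 \<Longrightarrow> (\<Sum>j. ennreal ((\<psi> j x - \<psi> j y)\<^sup>2)) \<le> ennreal \<eta>"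
    and support: "\<And>j y. \<psi> j y \<noteq> 0 \<Longrightarrow> dist y (d j) \<le> s"
    by (rule square_partition_of_unity[OF \<open>\<eta> > 0\<close> propagation_pos]) (rule that)
  define R where "R = 2 * \<bar>s\<bar> + 2 * r0 + 1"
  define F where "F = (\<Union>x\<in>{x. opnorm M (ind_op (cball x R) T) < e}. ball x 1)"
  have F: "F \<in> sets M" unfolding F_def by (intro borel_sets borel_open) auto
  have "F \<in> co_filter \<xi>"
    unfolding F_def R_def using propagation_pos approx_pos
    by (intro ball_union_in_co_filter[OF bounded_T lim]) auto
  moreover have "opnorm M (ind_op F T) \<le> 5 * e"
  proof (rule opnorm_least)
    fix f assume f: "sq_int M f" "l2norm M f \<le> 1"
    have pieces: "l2norm M (mult_ind F (Op M k (\<lambda>y. complex_of_real (\<psi> j y) * f y)))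
        \<le> 2 * e * l2norm M (\<lambda>y. complex_of_real (\<psi> j y) * f y)" for j
    proof -
      have "complex_of_real (\<psi> j y) * f y = 0" if "y \<notin> cball (d j) \<bar>s\<bar>" for y
      proof -
        have "\<not> dist y (d j) \<le> s" using that abs_ge_self[of s] by (simp add: dist_commute)
        then show ?thesis using support[of j y] by auto
      qed
      moreover have "2 * \<bar>s\<bar> + 2 * r0 + 1 \<le> R" unfolding R_def by simp
      ultimately show ?thesis unfolding F_def
        by (rule l2norm_mult_ind_ball_union_Op_le[OF sq_int_of_real_mult[OF f(1) \<psi>(1) \<psi>(2)]])
    qed
    have "(\<integral>\<^sup>+x. (\<Sum>j. ennreal ((cmod (complex_of_real (\<psi> j x) * Op M k f x
          - Op M k (\<lambda>y. complex_of_real (\<psi> j y) * f y) x))\<^sup>2)) \<partial>M)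
        \<le> ennreal (C * \<eta> * (l2norm M f)\<^sup>2)"
      using commutator[OF \<psi>(1) \<psi>(2) slow less_imp_le[OF \<open>\<eta> > 0\<close>] f(1)] by blast
    then have "(l2norm M (mult_ind F (Op M k f)))\<^sup>2 \<le> (2 * (2 * e)\<^sup>2 + 2 * (C * \<eta>)) * (l2norm M f)\<^sup>2"
      using approx_pos \<open>C \<ge> 0\<close> \<open>\<eta> > 0\<close>
      by (intro l2norm_mult_ind_Op_partition_le[OF F f(1) \<psi>(1) \<psi>(2) \<psi>(3) pieces, of "C * \<eta>"]) simp_all
    also have "\<dots> \<le> (4 * e)\<^sup>2"
    proof -
      have "(2 * e)\<^sup>2 = 4 * e\<^sup>2" "(4 * e)\<^sup>2 = 16 * e\<^sup>2" by (simp_all add: power_mult_distrib)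
      then have "2 * (2 * e)\<^sup>2 + 2 * (C * \<eta>) \<le> (4 * e)\<^sup>2"
        using C\<eta> zero_le_power2[of e] by linarith
      moreover have "(l2norm M f)\<^sup>2 \<le> 1" by (rule power_le_one[OF l2norm_nonneg f(2)])
      ultimately show ?thesis
        using mult_mono[of "2 * (2 * e)\<^sup>2 + 2 * (C * \<eta>)" "(4 * e)\<^sup>2" "(l2norm M f)\<^sup>2" 1] by simp
    qed
    finally have "l2norm M (mult_ind F (Op M k f)) \<le> 4 * e"
      by (rule power2_le_imp_le) (use approx_pos in simp)
    then show "l2norm M (mult_ind F (T f)) \<le> 5 * e"
      using l2norm_mult_ind_T_le[OF F f] by linarith
  qed
  ultimately show ?thesis using F that by blast
qed

end


section \<open>The three conditions\<close>

context property_A_space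
begin

lemma ind_op_tendsto_if_op_ind_tendsto:
  assumes T: "in_E M T" and lim: "\<forall>r>0. ((\<lambda>x. opnorm M (op_ind T (cball x r))) \<longlongrightarrow> 0) \<xi>" and "r > 0"
  shows "((\<lambda>x. opnorm M (ind_op (cball x r) T)) \<longlongrightarrow> 0) \<xi>"
proof (rule tendsto_zero_if_eventually_le)
  have bounded: "bounded_op M T" using T unfolding in_E_def by blast
  show "0 \<le> opnorm M (ind_op (cball x r) T)" for x
    by (rule opnorm_nonneg[OF bounded_op_ind_op[OF bounded cball_sets]])
  fix \<epsilon> :: real assume "\<epsilon> > 0"
  then have small: "\<epsilon> / 3 > 0" by simp
  then obtain k K r0 where "kernel_approx M k K r0 T (\<epsilon> / 3)"
    using in_E_kernel_approx[OF T] by blast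
  then interpret kernel_approx M k K r0 T "\<epsilon> / 3" .
  have "r + r0 > 0" using \<open>r > 0\<close> propagation_pos by simp
  have "eventually (\<lambda>x. opnorm M (op_ind T (cball x (r + r0))) < \<epsilon> / 3) \<xi>"
    by (rule order_tendstoD(2)[OF lim[rule_format, OF \<open>r + r0 > 0\<close>] small])
  then show "eventually (\<lambda>x. opnorm M (ind_op (cball x r) T) \<le> \<epsilon>) \<xi>"
  proof (rule eventually_mono)
    fix x assume "opnorm M (op_ind T (cball x (r + r0))) < \<epsilon> / 3"
    from opnorm_ind_op_le[OF this] show "opnorm M (ind_op (cball x r) T) \<le> \<epsilon>" by simp
  qed
qed

lemma op_ind_tendsto_if_ind_op_tendsto:
  assumes T: "in_E M T" and lim: "\<forall>r>0. ((\<lambda>x. opnorm M (ind_op (cball x r) T)) \<longlongrightarrow> 0) \<xi>" and "r > 0"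
  shows "((\<lambda>x. opnorm M (op_ind T (cball x r))) \<longlongrightarrow> 0) \<xi>"
proof (rule tendsto_zero_if_eventually_le)
  have bounded: "bounded_op M T" using T unfolding in_E_def by blast
  show "0 \<le> opnorm M (op_ind T (cball x r))" for x
    by (rule opnorm_nonneg[OF bounded_op_op_ind[OF bounded cball_sets]])
  fix \<epsilon> :: real assume "\<epsilon> > 0"
  then have small: "\<epsilon> / 3 > 0" by simp
  then obtain k K r0 where "kernel_approx M k K r0 T (\<epsilon> / 3)"
    using in_E_kernel_approx[OF T] by blast
  then interpret kernel_approx M k K r0 T "\<epsilon> / 3" .
  have "r + r0 > 0" using \<open>r > 0\<close> propagation_pos by simp
  have "eventually (\<lambda>x. opnorm M (ind_op (cball x (r + r0)) T) < \<epsilon> / 3) \<xi>"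
    by (rule order_tendstoD(2)[OF lim[rule_format, OF \<open>r + r0 > 0\<close>] small])
  then show "eventually (\<lambda>x. opnorm M (op_ind T (cball x r)) \<le> \<epsilon>) \<xi>"
  proof (rule eventually_mono)
    fix x assume "opnorm M (ind_op (cball x (r + r0)) T) < \<epsilon> / 3"
    from opnorm_op_ind_le[OF this] show "opnorm M (op_ind T (cball x r)) \<le> \<epsilon>" by simp
  qed
qed

lemma bdd_below_opnorm_ind_op:
  "bounded_op M T \<Longrightarrow> bdd_below ((\<lambda>F. opnorm M (ind_op F T)) ` {F \<in> \<eta>. F \<in> sets M})"
  by (intro bdd_belowI[of _ 0]) (auto intro: opnorm_nonneg bounded_op_ind_op)

lemma co_filter_sets_nonempty: "{F \<in> co_filter \<xi>. F \<in> sets M} \<noteq> {}"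
  using UNIV_in_co_filter[of \<xi>] sets.top[of M] by auto

lemma ind_op_tendsto_if_J_ideal:
  assumes T: "T \<in> J_ideal M (co_filter \<xi>)" and "r > 0"
  shows "((\<lambda>x. opnorm M (ind_op (cball x r) T)) \<longlongrightarrow> 0) \<xi>"
proof (rule tendsto_zero_if_eventually_le)
  have bounded: "bounded_op M T" using T unfolding J_ideal_def in_E_def by blast
  show "0 \<le> opnorm M (ind_op (cball x r) T)" for x
    by (rule opnorm_nonneg[OF bounded_op_ind_op[OF bounded cball_sets]])
  fix \<epsilon> :: real assume "\<epsilon> > 0"
  have "(INF F \<in> {F \<in> co_filter \<xi>. F \<in> sets M}. opnorm M (ind_op F T)) < \<epsilon>"
    using T \<open>\<epsilon> > 0\<close> unfolding J_ideal_def by simp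
  then obtain F where F: "F \<in> co_filter \<xi>" "F \<in> sets M" and small: "opnorm M (ind_op F T) < \<epsilon>"
    unfolding cINF_less_iff[OF co_filter_sets_nonempty bdd_below_opnorm_ind_op[OF bounded]] by blast
  have "eventually (\<lambda>x. x \<in> inner_set r F) \<xi>" using F(1) \<open>r > 0\<close> unfolding co_filter_def by blast
  then show "eventually (\<lambda>x. opnorm M (ind_op (cball x r) T) \<le> \<epsilon>) \<xi>"
  proof (rule eventually_mono)
    fix x assume "x \<in> inner_set r F"
    then have "opnorm M (ind_op (cball x r) T) \<le> opnorm M (ind_op F T)"
      by (intro opnorm_ind_op_mono[OF bounded cball_subset_of_inner_set cball_sets F(2)])
    then show "opnorm M (ind_op (cball x r) T) \<le> \<epsilon>" using small by simp
  qed
qed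

lemma J_ideal_if_ind_op_tendsto:
  assumes T: "in_E M T" and lim: "\<forall>r>0. ((\<lambda>x. opnorm M (ind_op (cball x r) T)) \<longlongrightarrow> 0) \<xi>"
  shows "T \<in> J_ideal M (co_filter \<xi>)"
proof -
  have bounded: "bounded_op M T" using T unfolding in_E_def by blast
  have small: "(INF F \<in> {F \<in> co_filter \<xi>. F \<in> sets M}. opnorm M (ind_op F T)) \<le> 0 + \<epsilon>" if "\<epsilon> > 0" for \<epsilon>
  proof -
    obtain k K r0 where "kernel_approx M k K r0 T (\<epsilon> / 5)"
      using in_E_kernel_approx[OF T] \<open>\<epsilon> > 0\<close> by (meson divide_pos_pos zero_less_numeral)
    then interpret kernel_approx M k K r0 T "\<epsilon> / 5" .
    obtain F where "F \<in> sets M" "F \<in> co_filter \<xi>" "opnorm M (ind_op F T) \<le> 5 * (\<epsilon> / 5)"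
      by (rule co_filter_set_small[OF lim])
    then show ?thesis
      by (intro cINF_lower2[OF bdd_below_opnorm_ind_op[OF bounded]]) simp_all
  qed
  have "(INF F \<in> {F \<in> co_filter \<xi>. F \<in> sets M}. opnorm M (ind_op F T)) = 0"
  proof (rule antisym)
    show "(INF F \<in> {F \<in> co_filter \<xi>. F \<in> sets M}. opnorm M (ind_op F T)) \<le> 0"
      by (rule field_le_epsilon[OF small])
    show "0 \<le> (INF F \<in> {F \<in> co_filter \<xi>. F \<in> sets M}. opnorm M (ind_op F T))"
      by (rule cINF_greatest[OF co_filter_sets_nonempty opnorm_nonneg[OF bounded_op_ind_op[OF bounded]]]) simp
  qed
  then show ?thesis using T unfolding J_ideal_def by blast
qed

end

theorem theorem5p9:
  fixes M :: "'a::metric_space measure" and \<xi> :: "'a filter" and T :: "'a op"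
  assumes "class_A M"
    and "finer_than_frechet \<xi>"
    and "in_E M T"
  shows "(T \<in> J_ideal M (co_filter \<xi>) \<longleftrightarrow>
            (\<forall>r>0. ((\<lambda>x. opnorm M (\<lambda>f. T (mult_ind (cball x r) f))) \<longlongrightarrow> 0) \<xi>))
       \<and> ((\<forall>r>0. ((\<lambda>x. opnorm M (\<lambda>f. T (mult_ind (cball x r) f))) \<longlongrightarrow> 0) \<xi>) \<longleftrightarrow>
            (\<forall>r>0. ((\<lambda>x. opnorm M (\<lambda>f. mult_ind (cball x r) (T f))) \<longlongrightarrow> 0) \<xi>))"
proof -
  interpret property_A_space M by (rule class_A_imp_property_A_space[OF assms(1)])
  have ii_iii: "(\<forall>r>0. ((\<lambda>x. opnorm M (op_ind T (cball x r))) \<longlongrightarrow> 0) \<xi>) \<longleftrightarrow>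
      (\<forall>r>0. ((\<lambda>x. opnorm M (ind_op (cball x r) T)) \<longlongrightarrow> 0) \<xi>)"
    using ind_op_tendsto_if_op_ind_tendsto[OF assms(3)] op_ind_tendsto_if_ind_op_tendsto[OF assms(3)] by blast
  have i_iii: "T \<in> J_ideal M (co_filter \<xi>) \<longleftrightarrow> (\<forall>r>0. ((\<lambda>x. opnorm M (ind_op (cball x r) T)) \<longlongrightarrow> 0) \<xi>)"
    using ind_op_tendsto_if_J_ideal J_ideal_if_ind_op_tendsto[OF assms(3)] by blast
  show ?thesis using ii_iii i_iii by blast
qed

end
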